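(* In the bootstrap setting, let $|\alpha|+|\beta|+|\sigma|\le10$ and $i,j\in\{1,2,3\}$. Then for all $T\in[0,T_{\mathrm{boot}})$, $\mathcal A^{\alpha,\beta,\sigma}_6\lesssim\epsilon^2(1+T)^{2|\beta|(1+\delta)}$, where $$\mathcal A^{\alpha,\beta,\sigma}_6:=\big\|(1+t)^2\langle v\rangle^{2\nu_{\alpha,\beta,\sigma}}\langle x-(t+1)v\rangle^{2\omega_{\alpha,\beta,\sigma}-2}\bar a_{ij}(D^{\alpha,\beta,\sigma}g)^2\big\|_{L^1([0,T];L^1_xL^1_v)}.$$
   Context: Notation: $\langle z\rangle=\sqrt{1+|z|^2}$; repeated lower-case indices summed over $\{1,2,3\}$ unless fixed. Multi-indices $\alpha,\beta,\sigma\in(\mathbb N\cup\{0\})^3$ with $|\alpha|=\sum\alpha_l$. $D^{\alpha,\beta,\sigma}=\partial_x^\alpha\partial_v^\beta Y^\sigma$ with $Y^\sigma=\prod_lY_l^{\sigma_l}$, $Y_l=(t+1)\partial_{x_l}+\partial_{v_l}$. $\nu_{\alpha,\beta,\sigma}=20-\frac32(|\alpha|+|\sigma|)-\frac12|\beta|$, $\omega_{\alpha,\beta,\sigma}=20-\frac32|\sigma|-\frac12(|\alpha|+|\beta|)$, $W_{\alpha,\beta,\sigma}=\langle v\rangle^{\nu_{\alpha,\beta,\sigma}}\langle x-(t+1)v\rangle^{\omega_{\alpha,\beta,\sigma}}$. Mixed norms take $v$ first, then $x$, then $t$. Bootstrap setting: fix $\gamma\in[0,1)$, $d_0>0$, $\delta\in(0,\frac18)$;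 $a_{ij}(z)=(\delta_{ij}-z_iz_j/|z|^2)|z|^{\gamma+2}$, $c=\partial^2_{z_iz_j}a_{ij}$, $\bar a_{ij}=\int a_{ij}(v-v_* )f(t,x,v_* )dv_*$, $\bar c=\int c(v-v_* )f(t,x,v_* )dv_*$; Landau equation $\partial_tf+v_i\partial_{x_i}f=\bar a_{ij}\partial^2_{v_iv_j}f-\bar cf$; $d(t)=d_0(1+(1+t)^{-\delta})$. Energy norm for $T>0$: $\|h\|^2_{E_T}=\sum_{|\alpha|+|\beta|+|\sigma|\le10}(1+T)^{-|\beta|(1+\delta)}\big(\|W_{\alpha,\beta,\sigma}D^{\alpha,\beta,\sigma}h\|^2_{L^\infty([0,T);L^2_xL^2_v)}+\|\langle v\rangle^{1/2}W_{\alpha,\beta,\sigma}D^{\alpha,\beta,\sigma}h\|^2_{L^2([0,T);L^2_xL^2_v)}\big)$. $\epsilon_0=\epsilon_0(d_0,\gamma)>0$ is a fixed sufficiently small constant, $\epsilon\in[0,\epsilon_0]$, and $f_{\mathrm{ini}}$ satisfies $\sum_{|\alpha|+|\beta|+|\sigma|\le10}\|\langle v\rangle^{20-\frac32|\alpha|-\frac12|\beta|-\frac32|\sigma|}\langle x-v\rangle^{20-\frac32|\sigma|-\frac12|\beta|-\frac12|\alpha|}\partial_x^\alpha\partial_v^\beta(\partial_x+\partial_v)^\sigma(e^{2d_0\langle v\rangle}f_{\mathrm{ini}})\|^2_{L^2_xL^2_v}<\epsilon$. $T_{\mathrm{boot}}>0$ and $f:[0,T_{\mathrm{boot}})\times\mathbb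 R^3\times\mathbb R^3\to\mathbb R$ is a (sufficiently regular) solution of the Landau equation with $f\ge0$, $f(0)=f_{\mathrm{ini}}$; $g=e^{d(t)\langle v\rangle}f$; and $\|g\|_{E_T}\le\epsilon^{3/4}$ for all $T\in[0,T_{\mathrm{boot}})$. $A\lesssim B$ means $A\le CB$ with $C$ depending only on $d_0,\gamma$. *)

theory Defs
  imports "HOL-Analysis.Analysis" "HOL-Probability.Essential_Supremum"
begin

text \<open>Setting of the Landau equation bootstrap: positions x and velocities v
  live in real^3; index type 3 stands for the coordinate indices {1,2,3}.\<close>

type_synonym phase_fun = "real^3 \<Rightarrow> real^3 \<Rightarrow> real"
type_synonym mindex = "3 \<Rightarrow> nat"

definition japan :: "real^3 \<Rightarrow> real" where
  "japan z = sqrt (1 + (norm z)^2)"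

definition mlen :: "mindex \<Rightarrow> nat" where
  "mlen a = (\<Sum>l\<in>UNIV. a l)"

definition pd :: "3 \<Rightarrow> (real^3 \<Rightarrow> real) \<Rightarrow> real^3 \<Rightarrow> real" where
  "pd l \<phi> z = deriv (\<lambda>s. \<phi> (z + s *\<^sub>R axis l 1)) 0"

definition dx :: "3 \<Rightarrow> phase_fun \<Rightarrow> phase_fun" where
  "dx l h = (\<lambda>x v. deriv (\<lambda>s. h (x + s *\<^sub>R axis l 1) v) 0)"

definition dv :: "3 \<Rightarrow> phase_fun \<Rightarrow> phase_fun" where
  "dv l h = (\<lambda>x v. deriv (\<lambda>s. h x (v + s *\<^sub>R axis l 1)) 0)"

definition Yop :: "real \<Rightarrow> 3 \<Rightarrow> phase_fun \<Rightarrow> phase_fun" where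
  "Yop t l h = (\<lambda>x v. (t + 1) * dx l h x v + dv l h x v)"

definition Dop :: "real \<Rightarrow> mindex \<Rightarrow> mindex \<Rightarrow> mindex \<Rightarrow> phase_fun \<Rightarrow> phase_fun" where
  "Dop t \<alpha> \<beta> \<sigma> h =
     ((dx 1 ^^ \<alpha> 1) \<circ> (dx 2 ^^ \<alpha> 2) \<circ> (dx 3 ^^ \<alpha> 3) \<circ>
      (dv 1 ^^ \<beta> 1) \<circ> (dv 2 ^^ \<beta> 2) \<circ> (dv 3 ^^ \<beta> 3) \<circ>
      (Yop t 1 ^^ \<sigma> 1) \<circ> (Yop t 2 ^^ \<sigma> 2) \<circ> (Yop t 3 ^^ \<sigma> 3)) h"

definition nu :: "mindex \<Rightarrow> mindex \<Rightarrow> mindex \<Rightarrow> real" where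
  "nu \<alpha> \<beta> \<sigma> = 20 - 3/2 * (mlen \<alpha> + mlen \<sigma>) - 1/2 * mlen \<beta>"

definition omega :: "mindex \<Rightarrow> mindex \<Rightarrow> mindex \<Rightarrow> real" where
  "omega \<alpha> \<beta> \<sigma> = 20 - 3/2 * mlen \<sigma> - 1/2 * (mlen \<alpha> + mlen \<beta>)"

definition Wt :: "real \<Rightarrow> mindex \<Rightarrow> mindex \<Rightarrow> mindex \<Rightarrow> phase_fun" where
  "Wt t \<alpha> \<beta> \<sigma> = (\<lambda>x v. japan v powr nu \<alpha> \<beta> \<sigma> * japan (x - (t + 1) *\<^sub>R v) powr omega \<alpha> \<beta> \<sigma>)"

definition MI :: "(mindex \<times> mindex \<times> mindex) set" where
  "MI = {(\<alpha>, \<beta>, \<sigma>). mlen \<alpha> + mlen \<beta> + mlen \<sigma> \<le> 10}"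

definition L2sq :: "phase_fun \<Rightarrow> ennreal" where
  "L2sq h = (\<integral>\<^sup>+ x. (\<integral>\<^sup>+ v. ennreal ((h x v)^2) \<partial>lborel) \<partial>lborel)"

definition ET_sq :: "real \<Rightarrow> real \<Rightarrow> (real \<Rightarrow> phase_fun) \<Rightarrow> ennreal" where
  "ET_sq \<delta> T h = (\<Sum>(\<alpha>, \<beta>, \<sigma>)\<in>MI.
      ennreal ((1 + T) powr (- real (mlen \<beta>) * (1 + \<delta>))) *
      (esssup (restrict_space lborel {0..<T})
          (\<lambda>t. L2sq (\<lambda>x v. Wt t \<alpha> \<beta> \<sigma> x v * Dop t \<alpha> \<beta> \<sigma> (h t) x v))
       + (\<integral>\<^sup>+ t\<in>{0..<T}.
          L2sq (\<lambda>x v. japan v powr (1/2) * Wt t \<alpha> \<beta> \<sigma> x v * Dop t \<alpha> \<beta> \<sigma> (h t) x v) \<partial>lborel)))"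

definition akern :: "real \<Rightarrow> 3 \<Rightarrow> 3 \<Rightarrow> real^3 \<Rightarrow> real" where
  "akern \<gamma> i j z = ((if i = j then 1 else 0) - z$i * z$j / (norm z)^2) * norm z powr (\<gamma> + 2)"

definition ckern :: "real \<Rightarrow> real^3 \<Rightarrow> real" where
  "ckern \<gamma> z = (\<Sum>i\<in>UNIV. \<Sum>j\<in>UNIV. pd i (pd j (akern \<gamma> i j)) z)"

definition abar :: "real \<Rightarrow> (real \<Rightarrow> phase_fun) \<Rightarrow> 3 \<Rightarrow> 3 \<Rightarrow> real \<Rightarrow> phase_fun" where
  "abar \<gamma> f i j t = (\<lambda>x v. \<integral>w. akern \<gamma> i j (v - w) * f t x w \<partial>lborel)"

definition cbar :: "real \<Rightarrow> (real \<Rightarrow> phase_fun) \<Rightarrow> real \<Rightarrow> phase_fun" where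
  "cbar \<gamma> f t = (\<lambda>x v. \<integral>w. ckern \<gamma> (v - w) * f t x w \<partial>lborel)"

text \<open>Iterated (x,v) partial derivatives along a word of directions
  (False = x-direction, True = v-direction).\<close>

fun pdw :: "(bool \<times> 3) list \<Rightarrow> phase_fun \<Rightarrow> phase_fun" where
  "pdw [] h = h"
| "pdw ((b, l) # ws) h = (if b then dv l else dx l) (pdw ws h)"

text \<open>"Sufficiently regular": all iterated x,v partial derivatives exist
  (classically), are jointly continuous in (t,x,v) on [0,Tb) x R^3 x R^3,
  and f is differentiable in t on (0,Tb) with continuous time derivative.\<close>

definition regular_sol :: "real \<Rightarrow> (real \<Rightarrow> phase_fun) \<Rightarrow> bool" where
  "regular_sol Tb f \<longleftrightarrow>
     (\<forall>ws. \<forall>t\<in>{0..<Tb}. \<forall>x v l.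
        ((\<lambda>s. pdw ws (f t) (x + s *\<^sub>R axis l 1) v) has_real_derivative dx l (pdw ws (f t)) x v) (at 0) \<and>
        ((\<lambda>s. pdw ws (f t) x (v + s *\<^sub>R axis l 1)) has_real_derivative dv l (pdw ws (f t)) x v) (at 0)) \<and>
     (\<forall>ws. continuous_on ({0..<Tb} \<times> UNIV \<times> UNIV) (\<lambda>(t, x, v). pdw ws (f t) x v)) \<and>
     (\<forall>t\<in>{0<..<Tb}. \<forall>x v. ((\<lambda>s. f s x v) has_real_derivative deriv (\<lambda>s. f s x v) t) (at t)) \<and>
     continuous_on ({0<..<Tb} \<times> UNIV \<times> UNIV) (\<lambda>(t, x, v). deriv (\<lambda>s. f s x v) t)"

definition landau_sol :: "real \<Rightarrow> real \<Rightarrow> (real \<Rightarrow> phase_fun) \<Rightarrow> bool" where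
  "landau_sol \<gamma> Tb f \<longleftrightarrow>
     (\<forall>t\<in>{0<..<Tb}. \<forall>x v.
        deriv (\<lambda>s. f s x v) t + (\<Sum>i\<in>UNIV. v$i * dx i (f t) x v)
        = (\<Sum>i\<in>UNIV. \<Sum>j\<in>UNIV. abar \<gamma> f i j t x v * dv i (dv j (f t)) x v)
          - cbar \<gamma> f t x v * f t x v)"

definition dfun :: "real \<Rightarrow> real \<Rightarrow> real \<Rightarrow> real" where
  "dfun d0 \<delta> t = d0 * (1 + (1 + t) powr (- \<delta>))"

end

theory Submission
  imports Defs
begin

(*
  Since |a_ij(z)| <= |z|^(gamma+2) <= (1 + |z|) |z|^2, (1+t) |v-w| <= 2 <x-(t+1)v> <x-(t+1)w>
  and 1 + |v-w| <= 2 <v> <w>, the coefficient satisfies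
    |abar_ij(t,x,v)| <= 8 (1+t)^-2 <v> <x-(t+1)v>^2 A(t,x),
  with the moment A(t,x) = int <w> <x-(t+1)w>^2 |f(t,x,w)| dw.
  A is bounded uniformly in x: a weighted W^(1,1) Sobolev inequality in x (the weight
  <x-(t+1)w>^2 changes by at most a factor 4 over unit distances) reduces it to weighted L^1 norms
  of d_x^a f with a in {0,1}^3, and the AM-GM split
    <w> <z>^2 |p| <= c <w>^-6 <z>^-6 + (<w>^4 <z>^5 p)^2 / c,   c = eps^(3/4),
  bounds these by eps^(3/4) pi^6 + eps^(-3/4) eps^(3/2), via the sup-in-time part of the energy.
  Hence the integrand of A_6 is at most C eps^(3/4) (<v>^(1/2) W D g)^2, whose space-time integral
  is at most (1+T)^(|beta|(1+delta)) eps^(3/2) by the dissipative part of the energy;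
  finally eps^(9/4) <= eps^2.
*)

(* Unlike nn_integral_cmult, this needs no measurability of f. *)
lemma nn_integral_cmult_le:
  fixes c :: ennreal
  assumes "c \<noteq> \<infinity>"
  shows "(\<integral>\<^sup>+x. c * f x \<partial>M) \<le> c * (\<integral>\<^sup>+x. f x \<partial>M)"
proof (cases "c = 0")
  case False
  show ?thesis
    unfolding nn_integral_def[of M "\<lambda>x. c * f x"]
  proof (rule SUP_least, safe)
    fix g assume g: "simple_function M g" "g \<le> (\<lambda>x. c * f x)"
    define h where "h x = g x / c" for x
    have "simple_function M h"
      unfolding h_def divide_ennreal_def using g(1) by auto
    moreover have "h x \<le> f x" for x
    proof -
      have "g x / c \<le> (f x * c) / c"
        using g(2) by (simp add: le_fun_def divide_right_mono_ennreal mult.commute)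
      then show ?thesis unfolding h_def using False assms by (simp add: ennreal_mult_divide_eq)
    qed
    moreover have "g = (\<lambda>x. c * h x)"
      unfolding h_def using False assms by (auto simp: ennreal_times_divide ennreal_mult_divide_eq mult.commute[of c])
    ultimately show "integral\<^sup>S M g \<le> c * (\<integral>\<^sup>+x. f x \<partial>M)"
      by (simp add: nn_integral_eq_simple_integral[symmetric] mult_left_mono nn_integral_mono)
  qed
qed simp

lemma nn_integral_nn_integral_cmult_le:
  fixes c :: ennreal
  assumes "c \<noteq> \<infinity>"
  shows "(\<integral>\<^sup>+x. \<integral>\<^sup>+y. c * f x y \<partial>N \<partial>M) \<le> c * (\<integral>\<^sup>+x. \<integral>\<^sup>+y. f x y \<partial>N \<partial>M)"
  using assms by (intro order_trans[OF nn_integral_mono nn_integral_cmult_le] nn_integral_cmult_le)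

lemma set_nn_integral_unit_interval_le:
  fixes F H :: "real \<Rightarrow> ennreal"
  assumes "\<And>s. F s \<le> c * H s" "c \<noteq> \<infinity>"
  shows "(\<integral>\<^sup>+s\<in>{0..1}. F s \<partial>lborel) \<le> c * (\<integral>\<^sup>+s. H s \<partial>lborel)"
proof -
  have "(\<integral>\<^sup>+s\<in>{0..1}. F s \<partial>lborel) \<le> (\<integral>\<^sup>+s. c * H s \<partial>lborel)"
    using assms(1) by (intro nn_integral_mono) (auto split: split_indicator)
  also have "\<dots> \<le> c * (\<integral>\<^sup>+s. H s \<partial>lborel)" by (rule nn_integral_cmult_le[OF assms(2)])
  finally show ?thesis .
qed

lemma nn_integral_lborel_translate:
  fixes H :: "'a::euclidean_space \<Rightarrow> ennreal"
  assumes [measurable]: "H \<in> borel_measurable borel"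
  shows "(\<integral>\<^sup>+y. H (c + y) \<partial>lborel) = (\<integral>\<^sup>+y. H y \<partial>lborel)"
  by (subst (2) lborel_distr_plus[of c, symmetric]) (simp add: nn_integral_distr)

lemma nn_integral_lborel_cart3:
  fixes H :: "real^3 \<Rightarrow> ennreal"
  assumes [measurable]: "H \<in> borel_measurable borel"
  shows "(\<integral>\<^sup>+y. H y \<partial>lborel) =
    (\<integral>\<^sup>+c. \<integral>\<^sup>+b. \<integral>\<^sup>+a. H (a *\<^sub>R axis 1 1 + b *\<^sub>R axis 2 1 + c *\<^sub>R axis 3 1) \<partial>lborel \<partial>lborel \<partial>lborel)"
proof -
  interpret P: product_sigma_finite "\<lambda>_::real^3. lborel::real measure" by standard
  define e1 e2 e3 where "e1 = (axis 1 1 :: real^3)" and "e2 = (axis 2 1 :: real^3)" and "e3 = (axis 3 1 :: real^3)"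
  have B: "Basis = {e1, e2, e3}" unfolding e1_def e2_def e3_def by (auto simp: Basis_vec_def UNIV_3)
  have d: "e1 \<noteq> e2" "e1 \<noteq> e3" "e2 \<noteq> e3" unfolding e1_def e2_def e3_def by (simp_all add: axis_eq_axis)
  have "(\<integral>\<^sup>+ y. H y \<partial>lborel) = (\<integral>\<^sup>+ f. H (\<Sum>b\<in>Basis. f b *\<^sub>R b) \<partial>(\<Pi>\<^sub>M b\<in>Basis. lborel))"
    by (subst lborel_eq) (simp add: nn_integral_distr)
  also have "\<dots> = (\<integral>\<^sup>+ f. \<integral>\<^sup>+ a. H (a *\<^sub>R e1 + f e2 *\<^sub>R e2 + f e3 *\<^sub>R e3) \<partial>lborel \<partial>(\<Pi>\<^sub>M b\<in>{e2, e3}. lborel))"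
    unfolding B using d by (subst P.product_nn_integral_insert) (auto simp: add.assoc)
  also have "\<dots> = (\<integral>\<^sup>+ f. \<integral>\<^sup>+ b. \<integral>\<^sup>+ a. H (a *\<^sub>R e1 + b *\<^sub>R e2 + f e3 *\<^sub>R e3) \<partial>lborel \<partial>lborel \<partial>(\<Pi>\<^sub>M b\<in>{e3}. lborel))"
    using d by (subst P.product_nn_integral_insert) auto
  also have "\<dots> = (\<integral>\<^sup>+ c. \<integral>\<^sup>+ b. \<integral>\<^sup>+ a. H (a *\<^sub>R e1 + b *\<^sub>R e2 + c *\<^sub>R e3) \<partial>lborel \<partial>lborel \<partial>lborel)"
    by (subst P.product_nn_integral_singleton) auto
  finally show ?thesis unfolding e1_def e2_def e3_def .
qed

lemma continuous_on_compose_curried: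
  assumes "continuous_on UNIV (\<lambda>z. p (fst z) (snd z))" "continuous_on UNIV f" "continuous_on UNIV g"
  shows "continuous_on UNIV (\<lambda>u. p (f u) (g u))"
  using continuous_on_compose2[OF assms(1) continuous_on_Pair[OF assms(2,3)]] by simp

lemma borel_measurable_continuous_ennreal:
  fixes F :: "'a::euclidean_space \<Rightarrow> real"
  assumes "continuous_on UNIV F"
  shows "(\<lambda>z. ennreal (F z)) \<in> borel_measurable lborel"
  unfolding measurable_lborel2
  by (intro measurable_compose[OF _ measurable_ennreal] borel_measurable_continuous_onI assms)

lemma borel_measurable_continuous_pair_ennreal:
  fixes F :: "'a::euclidean_space \<Rightarrow> 'b::euclidean_space \<Rightarrow> real"
  assumes "continuous_on UNIV (\<lambda>z. F (fst z) (snd z))"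
  shows "(\<lambda>(a, b). ennreal (F a b)) \<in> borel_measurable (lborel \<Otimes>\<^sub>M lborel)"
  using borel_measurable_continuous_ennreal[OF assms] by (simp add: lborel_prod split_beta')

lemma abs_le_integral_unit_interval:
  fixes \<phi> \<phi>' :: "real \<Rightarrow> real"
  assumes d: "\<And>s. (\<phi> has_real_derivative \<phi>' s) (at s)" and c: "continuous_on UNIV \<phi>'"
  shows "ennreal \<bar>\<phi> 0\<bar>
    \<le> (\<integral>\<^sup>+s\<in>{0..1}. ennreal \<bar>\<phi> s\<bar> \<partial>lborel) + (\<integral>\<^sup>+s\<in>{0..1}. ennreal \<bar>\<phi>' s\<bar> \<partial>lborel)"
proof -
  have [measurable]: "\<phi> \<in> borel_measurable borel"
    using d by (intro borel_measurable_continuous_onI) (meson DERIV_isCont continuous_at_imp_continuous_on)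
  have ca: "continuous_on UNIV (\<lambda>s. \<bar>\<phi>' s\<bar>)" using c by (intro continuous_intros)
  define M where "M = integral {0..1} (\<lambda>s. \<bar>\<phi>' s\<bar>)"
  have intM: "((\<lambda>s. \<bar>\<phi>' s\<bar>) has_integral M) {0..1}"
    unfolding M_def by (intro integrable_integral integrable_continuous_real continuous_on_subset[OF ca]) auto
  have M0: "0 \<le> M" using intM by (rule has_integral_nonneg) auto
  have osc: "\<bar>\<phi> 0\<bar> \<le> \<bar>\<phi> s\<bar> + M" if s: "s \<in> {0..1}" for s
  proof -
    have ftc: "(\<phi>' has_integral (\<phi> s - \<phi> 0)) {0..s}"
      using s by (intro fundamental_theorem_of_calculus)
        (auto intro!: has_field_derivative_at_within d simp: has_real_derivative_iff_has_vector_derivative[symmetric])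
    have i1: "(\<lambda>s. \<bar>\<phi>' s\<bar>) integrable_on {0..s}"
      by (intro integrable_continuous_real continuous_on_subset[OF ca]) auto
    have "\<bar>\<phi> s - \<phi> 0\<bar> \<le> integral {0..s} (\<lambda>s. \<bar>\<phi>' s\<bar>)"
      using integral_norm_bound_integral[OF has_integral_integrable[OF ftc] i1] ftc
      by (simp add: integral_unique)
    also have "\<dots> \<le> M" unfolding M_def
      using s by (intro integral_subset_le i1 integrable_continuous_real continuous_on_subset[OF ca]) auto
    finally show ?thesis by linarith
  qed
  have "ennreal \<bar>\<phi> 0\<bar> = (\<integral>\<^sup>+s. ennreal \<bar>\<phi> 0\<bar> * indicator {0..1::real} s \<partial>lborel)"
    by (subst nn_integral_cmult_indicator) (auto simp: emeasure_lborel_Icc_eq)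
  also have "\<dots> \<le> (\<integral>\<^sup>+s. ennreal \<bar>\<phi> s\<bar> * indicator {0..1} s + ennreal M * indicator {0..1} s \<partial>lborel)"
    using osc M0 by (intro nn_integral_mono) (auto split: split_indicator simp flip: ennreal_plus intro!: ennreal_leI)
  also have "\<dots> = (\<integral>\<^sup>+s. ennreal \<bar>\<phi> s\<bar> * indicator {0..1} s \<partial>lborel) + ennreal M"
    by (subst nn_integral_add) (auto simp: nn_integral_cmult_indicator emeasure_lborel_Icc_eq)
  also have "ennreal M = (\<integral>\<^sup>+s. ennreal \<bar>\<phi>' s\<bar> * indicator {0..1} s \<partial>lborel)"
  proof -
    have "(\<lambda>s. ennreal (\<bar>\<phi>' s\<bar> * indicator {0..1} s)) = (\<lambda>s. ennreal \<bar>\<phi>' s\<bar> * indicator {0..1::real} s)"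
      by (auto split: split_indicator)
    then show ?thesis using nn_integral_has_integral_lebesgue[OF _ intM] by (simp add: mult.commute)
  qed
  finally show ?thesis .
qed

lemma weighted_abs_le_integral_unit_interval:
  fixes \<phi> \<phi>' r :: "real \<Rightarrow> real"
  assumes d: "\<And>s. (\<phi> has_real_derivative \<phi>' s) (at s)" and c: "continuous_on UNIV \<phi>'"
    and r: "0 \<le> r0" "\<And>s. s \<in> {0..1} \<Longrightarrow> r0 \<le> 4 * r s"
  shows "ennreal (r0 * \<bar>\<phi> 0\<bar>) \<le> 4 * (\<integral>\<^sup>+s\<in>{0..1}. ennreal (r s * \<bar>\<phi> s\<bar> + r s * \<bar>\<phi>' s\<bar>) \<partial>lborel)"
proof -
  have [measurable]: "\<phi> \<in> borel_measurable borel" "\<phi>' \<in> borel_measurable borel"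
    using d c by (auto intro!: borel_measurable_continuous_onI
        intro: continuous_at_imp_continuous_on DERIV_isCont)
  have "ennreal (r0 * \<bar>\<phi> 0\<bar>) \<le> ennreal r0 * (\<integral>\<^sup>+s\<in>{0..1}. ennreal \<bar>\<phi> s\<bar> + ennreal \<bar>\<phi>' s\<bar> \<partial>lborel)"
    using mult_left_mono[OF abs_le_integral_unit_interval[OF d c], of "ennreal r0"] r(1)
    by (simp add: ennreal_mult' nn_set_integral_add)
  also have "\<dots> = (\<integral>\<^sup>+s\<in>{0..1}. ennreal (r0 * (\<bar>\<phi> s\<bar> + \<bar>\<phi>' s\<bar>)) \<partial>lborel)"
    using r(1) by (subst nn_integral_cmult[symmetric]) (auto simp: ennreal_mult' mult_ac intro!: nn_integral_cong)
  also have "\<dots> \<le> (\<integral>\<^sup>+s\<in>{0..1}. 4 * ennreal (r s * \<bar>\<phi> s\<bar> + r s * \<bar>\<phi>' s\<bar>) \<partial>lborel)"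
  proof (intro nn_integral_mono)
    fix s
    have "ennreal (r0 * (\<bar>\<phi> s\<bar> + \<bar>\<phi>' s\<bar>)) \<le> 4 * ennreal (r s * \<bar>\<phi> s\<bar> + r s * \<bar>\<phi>' s\<bar>)"
      if "s \<in> {0..1}"
    proof -
      have "ennreal (r0 * (\<bar>\<phi> s\<bar> + \<bar>\<phi>' s\<bar>)) \<le> ennreal (4 * (r s * \<bar>\<phi> s\<bar> + r s * \<bar>\<phi>' s\<bar>))"
        using mult_right_mono[OF r(2)[OF that], of "\<bar>\<phi> s\<bar> + \<bar>\<phi>' s\<bar>"]
        by (intro ennreal_leI) (simp add: algebra_simps)
      also have "\<dots> = 4 * ennreal (r s * \<bar>\<phi> s\<bar> + r s * \<bar>\<phi>' s\<bar>)"
        by (subst ennreal_mult') auto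
      finally show ?thesis .
    qed
    then show "ennreal (r0 * (\<bar>\<phi> s\<bar> + \<bar>\<phi>' s\<bar>)) * indicator {0..1} s
        \<le> 4 * ennreal (r s * \<bar>\<phi> s\<bar> + r s * \<bar>\<phi>' s\<bar>) * indicator {0..1} s"
      by (auto split: split_indicator)
  qed
  also have "\<dots> \<le> 4 * (\<integral>\<^sup>+s\<in>{0..1}. ennreal (r s * \<bar>\<phi> s\<bar> + r s * \<bar>\<phi>' s\<bar>) \<partial>lborel)"
    using nn_integral_cmult_le[of 4] by (simp add: mult.assoc)
  finally show ?thesis .
qed

lemma weighted_abs_le_line_integral:
  fixes u u' \<rho> :: "real^3 \<Rightarrow> real" and e :: "real^3"
  assumes d: "\<And>x. ((\<lambda>s. u (x + s *\<^sub>R e)) has_real_derivative u' x) (at 0)"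
    and cu': "continuous_on UNIV u'"
    and \<rho>: "\<And>x s. s \<in> {0..1} \<Longrightarrow> \<rho> x \<le> 4 * \<rho> (x + s *\<^sub>R e)" "\<And>x. 0 \<le> \<rho> x"
  shows "ennreal (\<rho> x * \<bar>u x\<bar>) \<le> 4 * (\<integral>\<^sup>+s\<in>{0..1}. ennreal (\<rho> (x + s *\<^sub>R e) * \<bar>u (x + s *\<^sub>R e)\<bar>
            + \<rho> (x + s *\<^sub>R e) * \<bar>u' (x + s *\<^sub>R e)\<bar>) \<partial>lborel)"
proof -
  have deriv: "((\<lambda>s. u (x + s *\<^sub>R e)) has_real_derivative u' (x + s *\<^sub>R e)) (at s)" for s
  proof -
    have "((\<lambda>r. u (x + (r + s) *\<^sub>R e)) has_real_derivative u' (x + s *\<^sub>R e)) (at 0)"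
      using d[of "x + s *\<^sub>R e"] by (simp add: algebra_simps scaleR_add_left)
    then show ?thesis using DERIV_shift[of "\<lambda>s. u (x + s *\<^sub>R e)" _ 0 s] by (simp add: add.commute)
  qed
  have "continuous_on UNIV (\<lambda>s::real. u' (x + s *\<^sub>R e))"
    by (rule continuous_on_compose2[OF cu']) (auto intro!: continuous_intros)
  from weighted_abs_le_integral_unit_interval[OF deriv this \<rho>(2) \<rho>(1)] show ?thesis by simp
qed

definition extend_words :: "3 \<Rightarrow> (bool \<times> 3) list list \<Rightarrow> (bool \<times> 3) list list" where
  "extend_words l S = S @ map ((#) (False, l)) S"

(* Directions are added in the order 3, 2, 1, so each word applies d_x1 outermost, as Dop does. *)
definition box_words :: "(bool \<times> 3) list list" where
  "box_words = extend_words 1 (extend_words 2 (extend_words 3 [[]]))"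

lemma distinct_box_words: "distinct box_words"
  by (simp add: box_words_def extend_words_def)

lemma continuous_on_sum_list_weighted:
  fixes P :: "'i \<Rightarrow> 'a::topological_space \<Rightarrow> real"
  assumes "\<And>ws. continuous_on UNIV (P ws)" "continuous_on UNIV \<rho>"
  shows "continuous_on UNIV (\<lambda>z. \<Sum>ws\<leftarrow>S. \<rho> z * \<bar>P ws z\<bar>)"
  by (induction S) (auto intro!: continuous_intros assms)

lemma borel_measurable_along_line:
  fixes F :: "'a::real_normed_vector \<Rightarrow> real"
  assumes "continuous_on UNIV F"
  shows "(\<lambda>s::real. F (x + s *\<^sub>R e)) \<in> borel_measurable borel"
  by (intro borel_measurable_continuous_onI continuous_on_compose2[OF assms]) (auto intro!: continuous_intros)

lemma nn_integral_weighted_sum_list: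
  fixes P :: "'i \<Rightarrow> 'a::euclidean_space \<Rightarrow> real"
  assumes "distinct S" "\<And>ws. continuous_on UNIV (P ws)" "continuous_on UNIV \<rho>" "\<And>y. 0 \<le> \<rho> y"
  shows "(\<integral>\<^sup>+y. ennreal (\<Sum>ws\<leftarrow>S. \<rho> y * \<bar>P ws y\<bar>) \<partial>lborel) = (\<Sum>ws\<in>set S. \<integral>\<^sup>+y. ennreal (\<rho> y * \<bar>P ws y\<bar>) \<partial>lborel)"
proof -
  have "ennreal (\<Sum>ws\<leftarrow>S. \<rho> y * \<bar>P ws y\<bar>) = (\<Sum>ws\<in>set S. ennreal (\<rho> y * \<bar>P ws y\<bar>))" for y
    using assms(1,4) by (simp add: sum_list_distinct_conv_sum_set sum_ennreal)
  moreover have "(\<lambda>y. ennreal (\<rho> y * \<bar>P ws y\<bar>)) \<in> borel_measurable lborel" for ws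
    by (intro borel_measurable_continuous_ennreal continuous_intros assms(2,3))
  ultimately show ?thesis by (simp add: nn_integral_sum)
qed

lemma weighted_sum_le_line_integral:
  fixes P :: "(bool \<times> 3) list \<Rightarrow> real^3 \<Rightarrow> real" and \<rho> :: "real^3 \<Rightarrow> real"
  assumes d: "\<And>ws x. ((\<lambda>s. P ws (x + s *\<^sub>R axis l 1)) has_real_derivative P ((False, l) # ws) x) (at 0)"
    and c: "\<And>ws. continuous_on UNIV (P ws)" and cr: "continuous_on UNIV \<rho>"
    and \<rho>: "\<And>x s. s \<in> {0..1} \<Longrightarrow> \<rho> x \<le> 4 * \<rho> (x + s *\<^sub>R axis l 1)" "\<And>x. 0 \<le> \<rho> x"
  shows "ennreal (\<Sum>ws\<leftarrow>S. \<rho> x * \<bar>P ws x\<bar>) \<le> 4 * (\<integral>\<^sup>+s\<in>{0..1}. ennreal (\<Sum>ws\<leftarrow>extend_words l S.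
            \<rho> (x + s *\<^sub>R axis l 1) * \<bar>P ws (x + s *\<^sub>R axis l 1)\<bar>) \<partial>lborel)"
proof (induction S)
  case (Cons ws S)
  let ?y = "\<lambda>s::real. x + s *\<^sub>R axis l 1"
  define A where "A s = \<rho> (?y s) * \<bar>P ws (?y s)\<bar> + \<rho> (?y s) * \<bar>P ((False, l) # ws) (?y s)\<bar>" for s
  define B where "B s = (\<Sum>ws\<leftarrow>extend_words l S. \<rho> (?y s) * \<bar>P ws (?y s)\<bar>)" for s
  have [measurable]: "A \<in> borel_measurable borel" "B \<in> borel_measurable borel"
    unfolding A_def B_def
    by (intro borel_measurable_along_line continuous_on_sum_list_weighted continuous_intros c cr)+
  have nonneg: "0 \<le> A s" "0 \<le> B s" "0 \<le> (\<Sum>ws\<leftarrow>S. \<rho> x * \<bar>P ws x\<bar>)" for s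
    unfolding A_def B_def using \<rho>(2) by (auto intro!: sum_list_nonneg simp del: map_map)
  have "ennreal (\<Sum>ws\<leftarrow>ws # S. \<rho> x * \<bar>P ws x\<bar>) = ennreal (\<rho> x * \<bar>P ws x\<bar>) + ennreal (\<Sum>ws\<leftarrow>S. \<rho> x * \<bar>P ws x\<bar>)"
    using nonneg \<rho>(2)[of x] by (simp add: ennreal_plus)
  also have "\<dots> \<le> 4 * (\<integral>\<^sup>+s\<in>{0..1}. ennreal (A s) \<partial>lborel) + 4 * (\<integral>\<^sup>+s\<in>{0..1}. ennreal (B s) \<partial>lborel)"
    unfolding A_def B_def
    by (intro add_mono weighted_abs_le_line_integral Cons.IH d c \<rho>)
  also have "\<dots> = 4 * (\<integral>\<^sup>+s\<in>{0..1}. ennreal (A s + B s) \<partial>lborel)"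
    using nonneg by (simp add: nn_integral_add[symmetric] distrib_left[symmetric] ennreal_plus distrib_right del: distrib_left)
  also have "(\<lambda>s. A s + B s) = (\<lambda>s. \<Sum>ws\<leftarrow>extend_words l (ws # S). \<rho> (?y s) * \<bar>P ws (?y s)\<bar>)"
    unfolding A_def B_def extend_words_def by (auto simp: algebra_simps)
  finally show ?case .
qed simp

lemma weighted_sobolev_cart3:
  fixes P :: "(bool \<times> 3) list \<Rightarrow> real^3 \<Rightarrow> real" and \<rho> :: "real^3 \<Rightarrow> real"
  assumes d: "\<And>l ws x. ((\<lambda>s. P ws (x + s *\<^sub>R axis l 1)) has_real_derivative P ((False, l) # ws) x) (at 0)"
    and c: "\<And>ws. continuous_on UNIV (P ws)" and cr: "continuous_on UNIV \<rho>"
    and \<rho>: "\<And>l x s. s \<in> {0..1} \<Longrightarrow> \<rho> x \<le> 4 * \<rho> (x + s *\<^sub>R axis l 1)" "\<And>x. 0 \<le> \<rho> x"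
  shows "ennreal (\<rho> x * \<bar>P [] x\<bar>) \<le> 64 * (\<Sum>ws\<in>set box_words. \<integral>\<^sup>+y. ennreal (\<rho> y * \<bar>P ws y\<bar>) \<partial>lborel)"
proof -
  define G where "G S z = ennreal (\<Sum>ws\<leftarrow>S. \<rho> z * \<bar>P ws z\<bar>)" for S z
  have step: "G S z \<le> 4 * (\<integral>\<^sup>+s\<in>{0..1}. G (extend_words l S) (z + s *\<^sub>R axis l 1) \<partial>lborel)" for S z l
    unfolding G_def by (rule weighted_sum_le_line_integral) (auto intro: d c cr \<rho>)
  let ?e1 = "axis 1 1 :: real^3" and ?e2 = "axis 2 1 :: real^3" and ?e3 = "axis 3 1 :: real^3"
  let ?W1 = "extend_words 3 [[]]" and ?W2 = "extend_words 2 (extend_words 3 [[]])"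
  have inner: "G ?W2 z \<le> 4 * (\<integral>\<^sup>+s1. G box_words (z + s1 *\<^sub>R ?e1) \<partial>lborel)" for z
  proof -
    have "G ?W2 z \<le> 4 * (\<integral>\<^sup>+s1\<in>{0..1}. G box_words (z + s1 *\<^sub>R ?e1) \<partial>lborel)"
      unfolding box_words_def by (rule step)
    also have "\<dots> \<le> 4 * (\<integral>\<^sup>+s1. G box_words (z + s1 *\<^sub>R ?e1) \<partial>lborel)"
      by (intro mult_left_mono nn_integral_mono) (auto split: split_indicator)
    finally show ?thesis .
  qed
  have middle: "G ?W1 z \<le> 16 * (\<integral>\<^sup>+s2. \<integral>\<^sup>+s1. G box_words (z + s2 *\<^sub>R ?e2 + s1 *\<^sub>R ?e1) \<partial>lborel \<partial>lborel)" for z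
  proof -
    have "G ?W1 z \<le> 4 * (\<integral>\<^sup>+s2\<in>{0..1}. G ?W2 (z + s2 *\<^sub>R ?e2) \<partial>lborel)" by (rule step)
    also have "\<dots> \<le> 4 * (4 * (\<integral>\<^sup>+s2. \<integral>\<^sup>+s1. G box_words (z + s2 *\<^sub>R ?e2 + s1 *\<^sub>R ?e1) \<partial>lborel \<partial>lborel))"
      by (intro mult_left_mono set_nn_integral_unit_interval_le inner) simp_all
    finally show ?thesis by (simp add: mult.assoc[symmetric])
  qed
  have [measurable]: "G box_words \<in> borel_measurable borel" unfolding G_def
    by (intro measurable_compose[OF _ measurable_ennreal] borel_measurable_continuous_onI
        continuous_on_sum_list_weighted c cr)
  have "ennreal (\<rho> x * \<bar>P [] x\<bar>) \<le> 4 * (\<integral>\<^sup>+s3\<in>{0..1}. G ?W1 (x + s3 *\<^sub>R ?e3) \<partial>lborel)"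
    using step[of "[[]]" x 3] by (simp add: G_def)
  also have "\<dots> \<le> 4 * (16 * (\<integral>\<^sup>+s3. \<integral>\<^sup>+s2. \<integral>\<^sup>+s1. G box_words (x + s3 *\<^sub>R ?e3 + s2 *\<^sub>R ?e2 + s1 *\<^sub>R ?e1)
      \<partial>lborel \<partial>lborel \<partial>lborel))"
    by (intro mult_left_mono set_nn_integral_unit_interval_le middle) simp_all
  also have "(\<integral>\<^sup>+s3. \<integral>\<^sup>+s2. \<integral>\<^sup>+s1. G box_words (x + s3 *\<^sub>R ?e3 + s2 *\<^sub>R ?e2 + s1 *\<^sub>R ?e1) \<partial>lborel \<partial>lborel \<partial>lborel)
      = (\<integral>\<^sup>+y. G box_words y \<partial>lborel)"
    using nn_integral_lborel_cart3[of "\<lambda>y. G box_words (x + y)"] nn_integral_lborel_translate[of "G box_words" x]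
    by (simp add: algebra_simps)
  also have "\<dots> = (\<Sum>ws\<in>set box_words. \<integral>\<^sup>+y. ennreal (\<rho> y * \<bar>P ws y\<bar>) \<partial>lborel)"
    unfolding G_def by (rule nn_integral_weighted_sum_list[OF distinct_box_words c cr \<rho>(2)])
  finally show ?thesis by (simp add: mult.assoc[symmetric])
qed

lemma japan_ge_one: "1 \<le> japan z"
  unfolding japan_def by simp

lemma japan_pos: "0 < japan z"
  using japan_ge_one[of z] by linarith

lemma japan_squared: "(japan z)^2 = 1 + (norm z)^2"
  unfolding japan_def by simp

lemma continuous_on_japan [continuous_intros]:
  "continuous_on S f \<Longrightarrow> continuous_on S (\<lambda>z. japan (f z))"
  unfolding japan_def by (intro continuous_intros)

lemma japan_pow_le_powr:
  assumes "real n \<le> a"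
  shows "japan z ^ n \<le> japan z powr a"
proof -
  have "japan z ^ n = japan z powr (real n)" using japan_pos[of z] by (simp add: powr_realpow)
  also have "\<dots> \<le> japan z powr a" using assms japan_ge_one[of z] by (intro powr_mono) auto
  finally show ?thesis .
qed

lemma japan_squared_le_shift:
  assumes "norm d \<le> 1"
  shows "(japan z)^2 \<le> 4 * (japan (z + d))^2"
proof -
  have "norm z \<le> norm (z + d) + 1"
    using norm_triangle_ineq4[of "z + d" d] assms by simp
  then have "(norm z)^2 \<le> (norm (z + d) + 1)^2" by (intro power_mono) auto
  also have "\<dots> \<le> 2 * (norm (z + d))^2 + 2"
    using sum_squares_bound[of "norm (z + d)" 1] by (simp add: power2_eq_square algebra_simps)
  finally show ?thesis unfolding japan_squared distrib_left using zero_le_power2[of "norm (z + d)"] by linarith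
qed

lemma one_plus_norm_diff_le_japan: "1 + norm (a - b) \<le> 2 * japan a * japan b"
proof -
  have "(1 + norm a + norm b)^2 \<le> 4 * (1 + (norm a)^2) * (1 + (norm b)^2)"
  proof -
    have "0 \<le> (norm a - 1)^2 + (norm b - 1)^2 + (norm a - norm b)^2 + 4 * (norm a)^2 * (norm b)^2
        + 1 + (norm a)^2 + (norm b)^2" by simp
    then show ?thesis by (simp add: power2_eq_square algebra_simps)
  qed
  also have "\<dots> = (2 * japan a * japan b)^2" by (simp add: japan_squared power_mult_distrib)
  finally have "1 + norm a + norm b \<le> 2 * japan a * japan b"
    by (rule power2_le_imp_le) (simp add: less_imp_le[OF japan_pos])
  then show ?thesis using norm_triangle_ineq4[of a b] by linarith
qed

lemma powr_plus_two_le: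
  fixes r :: real
  assumes "0 \<le> r" "0 \<le> \<gamma>" "\<gamma> \<le> 1"
  shows "r powr (\<gamma> + 2) \<le> (1 + r) * r^2"
proof -
  have "r powr \<gamma> \<le> 1 + r"
  proof (cases "r \<le> 1")
    case True
    then have "r powr \<gamma> \<le> 1" using assms by (intro powr_le1) auto
    then show ?thesis using assms(1) by linarith
  next
    case False
    then show ?thesis using assms powr_mono[of \<gamma> 1 r] by simp
  qed
  then show ?thesis
    using assms(1) by (cases "r = 0") (simp_all add: powr_add powr_realpow mult_right_mono)
qed

lemma abs_akern_le:
  fixes z :: "real^3"
  shows "\<bar>akern \<gamma> i j z\<bar> \<le> norm z powr (\<gamma> + 2)"
proof (cases "z = 0")
  case False
  have ci: "\<bar>z$i\<bar> \<le> norm z" and cj: "\<bar>z$j\<bar> \<le> norm z" by (rule component_le_norm_cart)+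
  have "\<bar>z$i * z$j\<bar> \<le> (norm z)^2"
    using mult_mono[OF ci cj] by (simp add: abs_mult power2_eq_square)
  then have "-((norm z)^2) \<le> z$i * z$j" "z$i * z$j \<le> (norm z)^2" by linarith+
  then have "-1 \<le> z$i * z$j / (norm z)^2" "z$i * z$j / (norm z)^2 \<le> 1" "0 \<le> z$i * z$i / (norm z)^2"
    using False by (simp_all add: field_simps)
  then have "\<bar>(if i = j then 1 else 0) - z$i * z$j / (norm z)^2\<bar> \<le> 1"
    by auto
  from mult_right_mono[OF this, of "norm z powr (\<gamma> + 2)"] show ?thesis
    by (simp add: akern_def abs_mult)
qed (simp add: akern_def)

lemma norm_diff_powr_le_weights:
  fixes v w x :: "real^3"
  assumes t: "0 \<le> t" and \<gamma>: "0 \<le> \<gamma>" "\<gamma> \<le> 1"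
  shows "norm (v - w) powr (\<gamma> + 2) \<le> 8 / (1 + t)^2 * japan v * (japan (x - (t + 1) *\<^sub>R v))^2
           * (japan w * (japan (x - (t + 1) *\<^sub>R w))^2)"
proof -
  let ?r = "norm (v - w)" and ?a = "japan (x - (t + 1) *\<^sub>R v)" and ?b = "japan (x - (t + 1) *\<^sub>R w)"
  have "(x - (t + 1) *\<^sub>R v) - (x - (t + 1) *\<^sub>R w) = (1 + t) *\<^sub>R (w - v)"
    by (simp add: algebra_simps)
  then have "(1 + t) * ?r \<le> 2 * ?a * ?b"
    using one_plus_norm_diff_le_japan[of "x - (t + 1) *\<^sub>R v" "x - (t + 1) *\<^sub>R w"] t
    by (simp add: norm_minus_commute)
  then have "((1 + t) * ?r)^2 \<le> (2 * ?a * ?b)^2"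
    using t by (intro power_mono) auto
  then have "?r^2 \<le> 4 * ?a^2 * ?b^2 / (1 + t)^2"
    using t by (simp add: pos_le_divide_eq power_mult_distrib mult.commute)
  then have "(1 + ?r) * ?r^2 \<le> (2 * japan v * japan w) * (4 * ?a^2 * ?b^2 / (1 + t)^2)"
    using one_plus_norm_diff_le_japan[of v w] japan_pos[of v] japan_pos[of w] by (intro mult_mono) auto
  then show ?thesis
    using powr_plus_two_le[OF norm_ge_zero \<gamma>, of "v - w"] by (simp add: field_simps)
qed

definition moment :: "real \<Rightarrow> phase_fun \<Rightarrow> real^3 \<Rightarrow> ennreal" where
  "moment t h x = (\<integral>\<^sup>+w. ennreal (japan w * (japan (x - (t + 1) *\<^sub>R w))^2 * \<bar>h x w\<bar>) \<partial>lborel)"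

lemma abs_abar_le_moment:
  assumes t: "0 \<le> t" and \<gamma>: "0 \<le> \<gamma>" "\<gamma> \<le> 1"
  shows "ennreal \<bar>abar \<gamma> f i j t x v\<bar>
      \<le> ennreal (8 / (1 + t)^2 * japan v * (japan (x - (t + 1) *\<^sub>R v))^2) * moment t (f t) x"
proof -
  let ?K = "8 / (1 + t)^2 * japan v * (japan (x - (t + 1) *\<^sub>R v))^2"
  have "ennreal \<bar>abar \<gamma> f i j t x v\<bar> \<le> (\<integral>\<^sup>+w. ennreal (norm (akern \<gamma> i j (v - w) * f t x w)) \<partial>lborel)"
  proof (cases "integrable lborel (\<lambda>w. akern \<gamma> i j (v - w) * f t x w)")
    case True
    then show ?thesis unfolding abar_def using integral_norm_bound_ennreal by fastforce
  qed (simp add: abar_def not_integrable_integral_eq)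
  also have "\<dots> \<le> (\<integral>\<^sup>+w. ennreal ?K * ennreal (japan w * (japan (x - (t + 1) *\<^sub>R w))^2 * \<bar>f t x w\<bar>) \<partial>lborel)"
  proof (intro nn_integral_mono)
    fix w :: "real^3"
    have "\<bar>akern \<gamma> i j (v - w)\<bar> \<le> ?K * (japan w * (japan (x - (t + 1) *\<^sub>R w))^2)"
      using abs_akern_le[of \<gamma> i j "v - w"] norm_diff_powr_le_weights[OF t \<gamma>, of v w x] by linarith
    from mult_right_mono[OF this abs_ge_zero[of "f t x w"]]
    show "ennreal (norm (akern \<gamma> i j (v - w) * f t x w))
        \<le> ennreal ?K * ennreal (japan w * (japan (x - (t + 1) *\<^sub>R w))^2 * \<bar>f t x w\<bar>)"
      using t japan_pos[of v] japan_pos[of w]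
      by (simp add: abs_mult ennreal_mult[symmetric] mult.assoc ennreal_leI)
  qed
  also have "\<dots> \<le> ennreal ?K * moment t (f t) x"
    unfolding moment_def by (rule nn_integral_cmult_le) simp
  finally show ?thesis .
qed

lemma nn_integral_inverse_one_plus_square_le: "(\<integral>\<^sup>+s. ennreal (inverse (1 + s^2)) \<partial>lborel) \<le> ennreal pi"
proof -
  let ?g = "\<lambda>s::real. ennreal (inverse (1 + s^2)) * indicator {0..} s"
  have [measurable]: "?g \<in> borel_measurable borel" by measurable
  have "(\<integral>\<^sup>+s. ?g s \<partial>lborel) = ennreal (pi/2 - arctan 0)"
    by (rule nn_integral_FTC_atLeast) (auto intro: DERIV_arctan tendsto_arctan_at_top)
  then have half: "(\<integral>\<^sup>+s. ?g s \<partial>lborel) = ennreal (pi/2)" by simp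
  have reflected: "(\<integral>\<^sup>+s. ?g (-s) \<partial>lborel) = ennreal (pi/2)"
    using nn_integral_real_affine[of ?g "-1" 0] half by simp
  have "(\<integral>\<^sup>+s. ennreal (inverse (1 + s^2)) \<partial>lborel) \<le> (\<integral>\<^sup>+s. ?g s + ?g (-s) \<partial>lborel)"
    by (intro nn_integral_mono) (auto split: split_indicator)
  also have "\<dots> = ennreal (pi/2) + ennreal (pi/2)"
    using half reflected by (subst nn_integral_add) auto
  also have "\<dots> = ennreal pi" by (simp flip: ennreal_plus)
  finally show ?thesis .
qed

lemma nn_integral_decay_cart3_le:
  "(\<integral>\<^sup>+y. ennreal (1 / (1 + (norm (y - c :: real^3))^2)^3) \<partial>lborel) \<le> ennreal (pi^3)"
proof -
  have pointwise: "1 / (1 + (norm y)^2)^3 \<le> (\<Prod>b\<in>Basis. inverse (1 + (y \<bullet> b)^2))" for y :: "real^3"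
  proof -
    have "(\<Prod>b\<in>Basis. (1 + (y \<bullet> b)^2)) \<le> (\<Prod>b\<in>(Basis::(real^3) set). (1 + (norm y)^2))"
      by (intro prod_mono) (simp add: abs_le_square_iff[symmetric] Basis_le_norm)
    then have le: "(\<Prod>b\<in>Basis. (1 + (y \<bullet> b)^2)) \<le> (1 + (norm y)^2)^3" by simp
    have "0 < (\<Prod>b\<in>(Basis::(real^3) set). (1 + (y \<bullet> b)^2))"
      by (intro prod_pos) (auto intro: add_pos_nonneg)
    then have "1 / (1 + (norm y)^2)^3 \<le> 1 / (\<Prod>b\<in>Basis. (1 + (y \<bullet> b)^2))"
      using le by (intro divide_left_mono) (auto intro!: mult_pos_pos add_pos_nonneg zero_less_power)
    then show ?thesis by (simp add: prod_inversef[symmetric] divide_inverse)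
  qed
  have [measurable]: "(\<lambda>y::real^3. ennreal (1 / (1 + (norm y)^2)^3)) \<in> borel_measurable borel"
    by measurable
  have "(\<integral>\<^sup>+y. ennreal (1 / (1 + (norm (y - c))^2)^3) \<partial>lborel)
      = (\<integral>\<^sup>+y. ennreal (1 / (1 + (norm (y::real^3))^2)^3) \<partial>lborel)"
    using nn_integral_lborel_translate[of "\<lambda>y::real^3. ennreal (1 / (1 + (norm y)^2)^3)" "-c"] by simp
  also have "\<dots> \<le> (\<integral>\<^sup>+y. (\<Prod>b\<in>Basis. ennreal (inverse (1 + ((y::real^3) \<bullet> b)^2))) \<partial>lborel)"
    using pointwise by (intro nn_integral_mono) (auto simp: prod_ennreal intro!: ennreal_leI)
  also have "\<dots> = (\<integral>\<^sup>+s. ennreal (inverse (1 + s^2)) \<partial>lborel) ^ 3"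
    by (subst nn_integral_lborel_prod) auto
  also have "\<dots> \<le> ennreal (pi^3)"
    using power_mono[OF nn_integral_inverse_one_plus_square_le, of 3] by (simp add: ennreal_power)
  finally show ?thesis .
qed

lemma nn_integral_decay_pair_le:
  fixes s :: real
  shows "(\<integral>\<^sup>+w. \<integral>\<^sup>+y. ennreal (1 / (1 + (norm w)^2)^3 * (1 / (1 + (norm (y - s *\<^sub>R w :: real^3))^2)^3))
    \<partial>lborel \<partial>lborel) \<le> ennreal (pi^6)"
proof -
  have inner: "(\<integral>\<^sup>+y. ennreal (1 / (1 + (norm w)^2)^3 * (1 / (1 + (norm (y - s *\<^sub>R w))^2)^3)) \<partial>lborel)
      \<le> ennreal (pi^3) * ennreal (1 / (1 + (norm w)^2)^3)" (is "?I w \<le> _") for w :: "real^3"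
  proof -
    have "(\<integral>\<^sup>+y. ennreal (1 / (1 + (norm w)^2)^3 * (1 / (1 + (norm (y - s *\<^sub>R w))^2)^3)) \<partial>lborel)
        = (\<integral>\<^sup>+y. ennreal (1 / (1 + (norm w)^2)^3) * ennreal (1 / (1 + (norm (y - s *\<^sub>R w))^2)^3) \<partial>lborel)"
      by (intro nn_integral_cong ennreal_mult') simp
    also have "\<dots> \<le> ennreal (1 / (1 + (norm w)^2)^3) * ennreal (pi^3)"
      by (intro order_trans[OF nn_integral_cmult_le] mult_left_mono nn_integral_decay_cart3_le) simp_all
    finally show ?thesis by (simp add: mult.commute)
  qed
  have "(\<integral>\<^sup>+w. ?I w \<partial>lborel) \<le> (\<integral>\<^sup>+w. ennreal (pi^3) * ennreal (1 / (1 + (norm (w :: real^3))^2)^3) \<partial>lborel)"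
    by (intro nn_integral_mono inner)
  also have "\<dots> \<le> ennreal (pi^3) * (\<integral>\<^sup>+w. ennreal (1 / (1 + (norm (w :: real^3))^2)^3) \<partial>lborel)"
    by (rule nn_integral_cmult_le) simp
  also have "\<dots> \<le> ennreal (pi^3) * ennreal (pi^3)"
    using nn_integral_decay_cart3_le[of 0] by (intro mult_left_mono) simp_all
  also have "\<dots> = ennreal (pi^6)"
    by (simp add: ennreal_mult'[symmetric] power_add[symmetric])
  finally show ?thesis .
qed

lemma nn_integral_swap_eq_L2sq:
  fixes h :: phase_fun
  assumes "continuous_on UNIV (\<lambda>z. h (fst z) (snd z))"
  shows "(\<integral>\<^sup>+w. \<integral>\<^sup>+y. ennreal ((h y w)^2) \<partial>lborel \<partial>lborel) = L2sq h"
proof -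
  have "continuous_on UNIV (\<lambda>z. (h (snd z) (fst z))^2)"
    by (intro continuous_intros continuous_on_compose_curried[OF assms])
  from lborel_pair.Fubini'[OF borel_measurable_continuous_pair_ennreal[OF this]]
  show ?thesis unfolding L2sq_def by simp
qed

lemma japan_weight_amgm:
  fixes w z :: "real^3"
  assumes "0 < c"
  shows "japan w * (japan z)^2 * \<bar>p\<bar>
    \<le> c * (1 / (1 + (norm w)^2)^3 * (1 / (1 + (norm z)^2)^3)) + (japan w ^ 4 * japan z ^ 5 * p)^2 / c"
proof -
  let ?a = "japan w" and ?b = "japan z"
  have a0: "0 < ?a" and b0: "0 < ?b" by (rule japan_pos)+
  define A where "A = 1 / (?a^3 * ?b^3)"
  define B where "B = ?a^4 * ?b^5 * \<bar>p\<bar>"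
  have "0 \<le> (c * A - B)^2" by simp
  then have "2 * (A * B) \<le> c * A^2 + B^2 / c"
    using assms by (simp add: field_simps power2_eq_square)
  moreover have "0 \<le> A * B" unfolding A_def B_def using a0 b0 by simp
  moreover have "A * B = ?a * ?b^2 * \<bar>p\<bar>"
    unfolding A_def B_def using a0 b0 by (simp add: field_simps power_numeral_reduce)
  moreover have "A^2 = 1 / (1 + (norm w)^2)^3 * (1 / (1 + (norm z)^2)^3)"
  proof -
    have "japan u ^ 6 = (1 + (norm u)^2)^3" for u :: "real^3"
      using power_mult[of "japan u" 2 3] by (simp add: japan_squared)
    then show ?thesis unfolding A_def by (simp add: power_mult_distrib power_divide flip: power_mult)
  qed
  moreover have "B^2 = (?a ^ 4 * ?b ^ 5 * p)^2" unfolding B_def by (simp add: power_mult_distrib)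
  ultimately show ?thesis by simp
qed

lemma nn_integral_weighted_abs_le_L2sq:
  fixes p :: "real^3 \<Rightarrow> real^3 \<Rightarrow> real" and t :: real
  defines "h \<equiv> \<lambda>y w. japan w ^ 4 * japan (y - (t + 1) *\<^sub>R w) ^ 5 * p y w"
  assumes cont: "continuous_on UNIV (\<lambda>z. p (fst z) (snd z))" and c: "0 < c" and L2: "L2sq h \<le> E"
  shows "(\<integral>\<^sup>+w. \<integral>\<^sup>+y. ennreal (japan w * (japan (y - (t + 1) *\<^sub>R w))^2 * \<bar>p y w\<bar>) \<partial>lborel \<partial>lborel)
     \<le> ennreal (c * pi^6) + ennreal (1 / c) * E"
proof -
  define q where "q w = 1 / (1 + (norm w)^2)^3" for w :: "real^3"
  define X where "X w y = q w * q (y - (t + 1) *\<^sub>R w)" for w y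
  have "1 + (norm u)^2 \<noteq> 0" for u :: "real^3" using zero_le_power2[of "norm u"] by linarith
  then have cX: "continuous_on UNIV (\<lambda>z. X (fst z) (snd z))"
    unfolding X_def q_def by (intro continuous_intros) auto
  have ch: "continuous_on UNIV (\<lambda>z. h (fst z) (snd z))"
    unfolding h_def by (intro continuous_intros continuous_on_compose_curried[OF cont])
  have [measurable]: "(\<lambda>(w, y). ennreal (X w y)) \<in> borel_measurable (lborel \<Otimes>\<^sub>M lborel)"
      "(\<lambda>(w, y). ennreal ((h y w)^2)) \<in> borel_measurable (lborel \<Otimes>\<^sub>M lborel)"
      "(\<lambda>y. ennreal (X w y)) \<in> borel_measurable lborel" "(\<lambda>y. ennreal ((h y w)^2)) \<in> borel_measurable lborel" for w
    by (intro borel_measurable_continuous_pair_ennreal borel_measurable_continuous_ennreal continuous_intros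
        continuous_on_compose_curried[OF cX] continuous_on_compose_curried[OF ch])+
  have "(\<integral>\<^sup>+w. \<integral>\<^sup>+y. ennreal (japan w * (japan (y - (t + 1) *\<^sub>R w))^2 * \<bar>p y w\<bar>) \<partial>lborel \<partial>lborel)
      \<le> (\<integral>\<^sup>+w. \<integral>\<^sup>+y. ennreal c * ennreal (X w y) + ennreal (1 / c) * ennreal ((h y w)^2) \<partial>lborel \<partial>lborel)"
    using japan_weight_amgm[OF c] c
    by (intro nn_integral_mono) (simp add: X_def h_def q_def ennreal_mult'[symmetric] ennreal_plus[symmetric]
        ennreal_leI del: ennreal_plus)
  also have "\<dots> = (\<integral>\<^sup>+w. \<integral>\<^sup>+y. ennreal c * ennreal (X w y) \<partial>lborel \<partial>lborel)
      + (\<integral>\<^sup>+w. \<integral>\<^sup>+y. ennreal (1 / c) * ennreal ((h y w)^2) \<partial>lborel \<partial>lborel)"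
    by (simp add: nn_integral_add lborel.borel_measurable_nn_integral)
  also have "\<dots> \<le> ennreal c * ennreal (pi^6) + ennreal (1 / c) * E"
    using nn_integral_decay_pair_le[of "t + 1"] L2 nn_integral_swap_eq_L2sq[OF ch]
    by (intro add_mono order_trans[OF nn_integral_nn_integral_cmult_le] mult_left_mono) (simp_all add: X_def q_def)
  finally show ?thesis using c by (simp add: ennreal_mult)
qed

definition smooth_in_x :: "phase_fun \<Rightarrow> bool" where
  "smooth_in_x F \<longleftrightarrow>
     (\<forall>ws x v l. ((\<lambda>s. pdw ws F (x + s *\<^sub>R axis l 1) v) has_real_derivative dx l (pdw ws F) x v) (at 0)) \<and>
     (\<forall>ws. continuous_on UNIV (\<lambda>z. pdw ws F (fst z) (snd z)))"

lemma smooth_in_xD: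
  assumes "smooth_in_x F"
  shows "((\<lambda>s. pdw ws F (x + s *\<^sub>R axis l 1) v) has_real_derivative dx l (pdw ws F) x v) (at 0)"
    and "continuous_on UNIV (\<lambda>z. pdw ws F (fst z) (snd z))"
  using assms unfolding smooth_in_x_def by blast+

lemma regular_sol_smooth_in_x:
  assumes "regular_sol Tb f" "t \<in> {0..<Tb}"
  shows "smooth_in_x (f t)"
  unfolding smooth_in_x_def
proof (intro conjI allI)
  show "((\<lambda>s. pdw ws (f t) (x + s *\<^sub>R axis l 1) v) has_real_derivative dx l (pdw ws (f t)) x v) (at 0)" for ws x v l
    using assms unfolding regular_sol_def by blast
  fix ws
  have "continuous_on ({0..<Tb} \<times> UNIV \<times> UNIV) (\<lambda>(t, x, v). pdw ws (f t) x v)"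
    using assms(1) unfolding regular_sol_def by blast
  then have "continuous_on UNIV ((\<lambda>(t, x, v). pdw ws (f t) x v) \<circ> (\<lambda>z. (t, fst z, snd z)))"
    using assms(2) by (intro continuous_on_compose continuous_on_subset[OF \<open>continuous_on _ _\<close>])
      (auto intro!: continuous_intros)
  then show "continuous_on UNIV (\<lambda>z. pdw ws (f t) (fst z) (snd z))"
    by (simp add: comp_def case_prod_beta)
qed

definition xword :: "mindex \<Rightarrow> (bool \<times> 3) list" where
  "xword a = replicate (a 1) (False, 1) @ replicate (a 2) (False, 2) @ replicate (a 3) (False, 3)"

lemma pdw_append: "pdw (ws @ vs) h = pdw ws (pdw vs h)"
proof (induction ws)
  case (Cons p ws)
  then show ?case by (cases p) simp
qed simp

lemma pdw_replicate_dx: "pdw (replicate n (False, l)) h = (dx l ^^ n) h"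
  by (induction n) auto

lemma Dop_spatial_eq_pdw: "Dop t a (\<lambda>_. 0) (\<lambda>_. 0) h = pdw (xword a) h"
  by (simp add: Dop_def xword_def pdw_append pdw_replicate_dx)

lemma length_xword: "length (xword a) = mlen a"
  by (simp add: xword_def mlen_def sum_3)

lemma box_word_obtain_xword:
  assumes "ws \<in> set box_words"
  obtains a where "ws = xword a" "mlen a \<le> 3"
proof
  show xw: "ws = xword (\<lambda>l. count_list ws (False, l))"
    using assms unfolding box_words_def extend_words_def by (auto simp: xword_def)
  have "length ws \<le> 3" using assms by (auto simp: box_words_def extend_words_def)
  then show "mlen (\<lambda>l. count_list ws (False, l)) \<le> 3"
    by (metis xw length_xword)
qed

lemma pdw_cmult_spatial:
  assumes "smooth_in_x F"
  shows "pdw (xword a) (\<lambda>x v. c v * F x v) = (\<lambda>x v. c v * pdw (xword a) F x v)"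
proof -
  have spatial: "pdw ws (\<lambda>x v. c v * F x v) = (\<lambda>x v. c v * pdw ws F x v)" if "\<forall>p\<in>set ws. \<not> fst p" for ws
    using that
  proof (induction ws)
    case (Cons p ws)
    obtain l where p: "p = (False, l)" using Cons.prems by (cases p) auto
    have "dx l (\<lambda>x v. c v * pdw ws F x v) x v = c v * dx l (pdw ws F) x v" for x v
      unfolding dx_def[of l "\<lambda>x v. c v * pdw ws F x v"] by (intro DERIV_imp_deriv DERIV_cmult smooth_in_xD(1)[OF assms])
    then show ?case using Cons by (auto simp: p)
  qed simp
  show ?thesis by (rule spatial) (auto simp: xword_def)
qed

lemma moment_integrand_le_sobolev:
  assumes F: "smooth_in_x F"
  shows "ennreal (japan w * (japan (x - (t + 1) *\<^sub>R w))^2 * \<bar>F x w\<bar>)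
    \<le> 64 * (\<Sum>ws\<in>set box_words. \<integral>\<^sup>+y. ennreal (japan w * (japan (y - (t + 1) *\<^sub>R w))^2 * \<bar>pdw ws F y w\<bar>) \<partial>lborel)"
proof -
  let ?\<rho> = "\<lambda>y. japan w * (japan (y - (t + 1) *\<^sub>R w))^2"
  have "ennreal (?\<rho> x * \<bar>pdw [] F x w\<bar>)
      \<le> 64 * (\<Sum>ws\<in>set box_words. \<integral>\<^sup>+y. ennreal (?\<rho> y * \<bar>pdw ws F y w\<bar>) \<partial>lborel)"
  proof (rule weighted_sobolev_cart3)
    show "?\<rho> z \<le> 4 * ?\<rho> (z + s *\<^sub>R axis l 1)" if "s \<in> {0..1}" for l z s
    proof -
      have "(japan (z - (t + 1) *\<^sub>R w))^2 \<le> 4 * (japan (z + s *\<^sub>R axis l 1 - (t + 1) *\<^sub>R w))^2"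
        using japan_squared_le_shift[of "s *\<^sub>R axis l 1" "z - (t + 1) *\<^sub>R w"] that
        by (simp add: algebra_simps)
      from mult_left_mono[OF this less_imp_le[OF japan_pos[of w]]] show ?thesis
        by (simp add: mult_ac)
    qed
    show "0 \<le> ?\<rho> z" for z using japan_pos[of w] by simp
  qed (auto intro!: continuous_intros continuous_on_compose_curried[OF smooth_in_xD(2)[OF F]] smooth_in_xD(1)[OF F])
  then show ?thesis by (simp add: mult.assoc)
qed

lemma moment_le:
  assumes F: "smooth_in_x F" and c: "0 < c" and e: "0 \<le> e"
    and L2: "\<And>ws. ws \<in> set box_words \<Longrightarrow>
      L2sq (\<lambda>y w. japan w ^ 4 * japan (y - (t + 1) *\<^sub>R w) ^ 5 * pdw ws F y w) \<le> ennreal e"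
  shows "moment t F x \<le> ennreal (512 * (c * pi^6 + e / c))"
proof -
  define T where "T ws y w = ennreal (japan w * (japan (y - (t + 1) *\<^sub>R w))^2 * \<bar>pdw ws F y w\<bar>)" for ws y w
  have meas: "(\<lambda>w. \<integral>\<^sup>+y. T ws y w \<partial>lborel) \<in> borel_measurable lborel" for ws
  proof -
    have "continuous_on UNIV (\<lambda>z. japan (fst z) * (japan (snd z - (t + 1) *\<^sub>R fst z))^2 * \<bar>pdw ws F (snd z) (fst z)\<bar>)"
      by (intro continuous_intros continuous_on_compose_curried[OF smooth_in_xD(2)[OF F]])
    from borel_measurable_continuous_pair_ennreal[OF this] show ?thesis
      unfolding T_def by (intro lborel.borel_measurable_nn_integral) (simp add: split_beta')
  qed
  have "moment t F x \<le> (\<integral>\<^sup>+w. 64 * (\<Sum>ws\<in>set box_words. \<integral>\<^sup>+y. T ws y w \<partial>lborel) \<partial>lborel)"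
    unfolding moment_def T_def by (intro nn_integral_mono moment_integrand_le_sobolev[OF F])
  also have "\<dots> \<le> 64 * (\<integral>\<^sup>+w. (\<Sum>ws\<in>set box_words. \<integral>\<^sup>+y. T ws y w \<partial>lborel) \<partial>lborel)"
    by (rule nn_integral_cmult_le) simp
  also have "\<dots> = 64 * (\<Sum>ws\<in>set box_words. \<integral>\<^sup>+w. \<integral>\<^sup>+y. T ws y w \<partial>lborel \<partial>lborel)"
    using meas by (simp add: nn_integral_sum)
  also have "\<dots> \<le> 64 * (\<Sum>ws\<in>set box_words. ennreal (c * pi^6) + ennreal (1 / c) * ennreal e)"
    unfolding T_def by (intro mult_left_mono sum_mono nn_integral_weighted_abs_le_L2sq smooth_in_xD(2)[OF F] c L2) auto
  also have "\<dots> = 512 * ennreal (c * pi^6 + e / c)"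
    using distinct_card[OF distinct_box_words] c e
    by (simp add: box_words_def extend_words_def ennreal_mult[symmetric] ennreal_plus[symmetric] del: ennreal_plus)
  also have "\<dots> = ennreal (512 * (c * pi^6 + e / c))"
    by (subst ennreal_mult') auto
  finally show ?thesis .
qed

lemma L2sq_mono:
  assumes "\<And>x v. \<bar>h x v\<bar> \<le> \<bar>k x v\<bar>"
  shows "L2sq h \<le> L2sq k"
  unfolding L2sq_def using assms
  by (intro nn_integral_mono ennreal_leI) (simp add: abs_le_square_iff)

lemma L2sq_xword_le_Wt_Dop:
  assumes F: "smooth_in_x F" and d: "0 \<le> d" and a: "mlen a \<le> 3"
  shows "L2sq (\<lambda>y w. japan w ^ 4 * japan (y - (t + 1) *\<^sub>R w) ^ 5 * pdw (xword a) F y w)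
     \<le> L2sq (\<lambda>x v. Wt t a (\<lambda>_. 0) (\<lambda>_. 0) x v * Dop t a (\<lambda>_. 0) (\<lambda>_. 0) (\<lambda>x v. exp (d * japan v) * F x v) x v)"
proof (rule L2sq_mono)
  fix x v
  have "japan v ^ 4 \<le> japan v powr nu a (\<lambda>_. 0) (\<lambda>_. 0)"
    and "japan (x - (t + 1) *\<^sub>R v) ^ 5 \<le> japan (x - (t + 1) *\<^sub>R v) powr omega a (\<lambda>_. 0) (\<lambda>_. 0)"
    using a by (auto intro!: japan_pow_le_powr simp: nu_def omega_def mlen_def[of "\<lambda>_. 0"])
  moreover have "1 \<le> exp (d * japan v)"
    using d japan_pos[of v] by simp
  ultimately show "\<bar>japan v ^ 4 * japan (x - (t + 1) *\<^sub>R v) ^ 5 * pdw (xword a) F x v\<bar>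
      \<le> \<bar>Wt t a (\<lambda>_. 0) (\<lambda>_. 0) x v * Dop t a (\<lambda>_. 0) (\<lambda>_. 0) (\<lambda>x v. exp (d * japan v) * F x v) x v\<bar>"
    using japan_pos[of v] japan_pos[of "x - (t + 1) *\<^sub>R v"]
    by (auto simp: Wt_def Dop_spatial_eq_pdw pdw_cmult_spatial[OF F] abs_mult
        intro!: mult_mono mult_le_cancel_right1[THEN iffD2])
qed

lemma moment_le_energy:
  assumes F: "smooth_in_x F" and d: "0 \<le> d" and c: "0 < c" and e: "0 \<le> e"
    and energy: "\<And>a. mlen a \<le> 3 \<Longrightarrow>
      L2sq (\<lambda>x v. Wt t a (\<lambda>_. 0) (\<lambda>_. 0) x v * Dop t a (\<lambda>_. 0) (\<lambda>_. 0) (\<lambda>x v. exp (d * japan v) * F x v) x v)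
        \<le> ennreal e"
  shows "moment t F x \<le> ennreal (512 * (c * pi^6 + e / c))"
proof (rule moment_le[OF F c e])
  fix ws assume "ws \<in> set box_words"
  then obtain a where "ws = xword a" "mlen a \<le> 3" by (rule box_word_obtain_xword)
  then show "L2sq (\<lambda>y w. japan w ^ 4 * japan (y - (t + 1) *\<^sub>R w) ^ 5 * pdw ws F y w) \<le> ennreal e"
    using order_trans[OF L2sq_xword_le_Wt_Dop[OF F d] energy] by simp
qed

lemma finite_MI: "finite MI"
proof -
  let ?B = "{a :: mindex. \<forall>l. a l \<le> 10}"
  have "?B = Pi\<^sub>E UNIV (\<lambda>_. {..10})" by (auto simp: PiE_UNIV_domain)
  then have "finite ?B" by (simp add: finite_PiE)
  moreover have le: "a l \<le> mlen a" for a :: mindex and l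
    unfolding mlen_def by (rule member_le_sum) auto
  have "MI \<subseteq> ?B \<times> ?B \<times> ?B"
  proof (clarsimp simp: MI_def)
    fix a b s :: mindex
    assume "mlen a + mlen b + mlen s \<le> 10"
    then have "mlen a \<le> 10" "mlen b \<le> 10" "mlen s \<le> 10" by linarith+
    then show "(\<forall>l. a l \<le> 10) \<and> (\<forall>l. b l \<le> 10) \<and> (\<forall>l. s l \<le> 10)"
      using le order_trans by blast
  qed
  ultimately show ?thesis by (auto intro: finite_subset)
qed

lemma ET_sq_component_le:
  assumes "(\<alpha>, \<beta>, \<sigma>) \<in> MI" "0 \<le> T"
  shows "esssup (restrict_space lborel {0..<T}) (\<lambda>t. L2sq (\<lambda>x v. Wt t \<alpha> \<beta> \<sigma> x v * Dop t \<alpha> \<beta> \<sigma> (h t) x v))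
       + (\<integral>\<^sup>+t\<in>{0..<T}. L2sq (\<lambda>x v. japan v powr (1/2) * Wt t \<alpha> \<beta> \<sigma> x v * Dop t \<alpha> \<beta> \<sigma> (h t) x v) \<partial>lborel)
     \<le> ennreal ((1 + T) powr (real (mlen \<beta>) * (1 + \<delta>))) * ET_sq \<delta> T h"
    (is "?S \<le> ennreal ?q * _")
proof -
  let ?p = "(1 + T) powr (- real (mlen \<beta>) * (1 + \<delta>))"
  have "ennreal ?p * ?S \<le> ET_sq \<delta> T h"
    unfolding ET_sq_def
    using member_le_sum[OF assms(1), of "\<lambda>(\<alpha>, \<beta>, \<sigma>). ennreal ((1 + T) powr (- real (mlen \<beta>) * (1 + \<delta>))) *
      (esssup (restrict_space lborel {0..<T}) (\<lambda>t. L2sq (\<lambda>x v. Wt t \<alpha> \<beta> \<sigma> x v * Dop t \<alpha> \<beta> \<sigma> (h t) x v))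
       + (\<integral>\<^sup>+t\<in>{0..<T}. L2sq (\<lambda>x v. japan v powr (1/2) * Wt t \<alpha> \<beta> \<sigma> x v * Dop t \<alpha> \<beta> \<sigma> (h t) x v) \<partial>lborel))"]
    by (simp add: finite_MI)
  then have "ennreal ?q * (ennreal ?p * ?S) \<le> ennreal ?q * ET_sq \<delta> T h"
    by (rule mult_left_mono) simp
  moreover have "ennreal ?q * ennreal ?p = 1"
    using assms(2) by (simp add: ennreal_mult[symmetric] powr_minus powr_add[symmetric])
  ultimately show ?thesis by (simp add: mult.assoc[symmetric])
qed

lemma ET_sq_ae_L2sq_le:
  assumes ET: "ET_sq \<delta> T h \<le> E" and "(\<alpha>, \<beta>, \<sigma>) \<in> MI" "0 \<le> T"
  shows "AE t in lborel. t \<in> {0..<T} \<longrightarrow> L2sq (\<lambda>x v. Wt t \<alpha> \<beta> \<sigma> x v * Dop t \<alpha> \<beta> \<sigma> (h t) x v)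
      \<le> ennreal ((1 + T) powr (real (mlen \<beta>) * (1 + \<delta>))) * E"
proof -
  let ?Q = "\<lambda>t. L2sq (\<lambda>x v. Wt t \<alpha> \<beta> \<sigma> x v * Dop t \<alpha> \<beta> \<sigma> (h t) x v)"
  have es: "esssup (restrict_space lborel {0..<T}) ?Q \<le> ennreal ((1 + T) powr (real (mlen \<beta>) * (1 + \<delta>))) * E"
    using order_trans[OF add_increasing2[OF zero_le order_refl] ET_sq_component_le[OF assms(2,3)]]
      mult_left_mono[OF ET] by (rule order_trans) simp
  have "AE t in lborel. t \<in> {0..<T} \<longrightarrow> ?Q t \<le> esssup (restrict_space lborel {0..<T}) ?Q"
    using esssup_AE[of ?Q "restrict_space lborel {0..<T}"] by (subst (asm) AE_restrict_space_iff) auto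
  then show ?thesis by (rule eventually_mono) (use es in \<open>auto dest: order_trans\<close>)
qed

lemma ET_sq_ae_spatial_L2sq_le:
  assumes energy: "ET_sq \<delta> T h \<le> E" and T: "0 \<le> T"
  shows "AE t in lborel. t \<in> {0..<T} \<longrightarrow> (\<forall>a. mlen a \<le> 3 \<longrightarrow>
    L2sq (\<lambda>x v. Wt t a (\<lambda>_. 0) (\<lambda>_. 0) x v * Dop t a (\<lambda>_. 0) (\<lambda>_. 0) (h t) x v) \<le> E)"
proof -
  have MI0: "(a, \<lambda>_. 0, \<lambda>_. 0) \<in> MI" if "mlen a \<le> 3" for a
    using that by (simp add: MI_def mlen_def[of "\<lambda>_. 0"])
  have "finite {a :: mindex. mlen a \<le> 3}"
    using MI0 by (intro finite_subset[OF _ finite_imageI[OF finite_MI, of fst]]) force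
  moreover have "AE t in lborel. t \<in> {0..<T} \<longrightarrow>
      L2sq (\<lambda>x v. Wt t a (\<lambda>_. 0) (\<lambda>_. 0) x v * Dop t a (\<lambda>_. 0) (\<lambda>_. 0) (h t) x v) \<le> E" if "mlen a \<le> 3" for a
    using ET_sq_ae_L2sq_le[OF energy MI0[OF that] T] T by (simp add: mlen_def[of "\<lambda>_. 0"])
  ultimately have "AE t in lborel. \<forall>a\<in>{a. mlen a \<le> 3}. t \<in> {0..<T} \<longrightarrow>
      L2sq (\<lambda>x v. Wt t a (\<lambda>_. 0) (\<lambda>_. 0) x v * Dop t a (\<lambda>_. 0) (\<lambda>_. 0) (h t) x v) \<le> E"
    by (intro AE_finite_allI) auto
  then show ?thesis by (rule eventually_mono) auto
qed

lemma ET_sq_time_integral_le: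
  assumes ET: "ET_sq \<delta> T h \<le> E" and "(\<alpha>, \<beta>, \<sigma>) \<in> MI" "0 \<le> T"
  shows "(\<integral>\<^sup>+t\<in>{0..<T}. L2sq (\<lambda>x v. japan v powr (1/2) * Wt t \<alpha> \<beta> \<sigma> x v * Dop t \<alpha> \<beta> \<sigma> (h t) x v) \<partial>lborel)
      \<le> ennreal ((1 + T) powr (real (mlen \<beta>) * (1 + \<delta>))) * E"
  using order_trans[OF add_increasing[OF zero_le order_refl] ET_sq_component_le[OF assms(2,3)]]
    mult_left_mono[OF ET] by (rule order_trans) simp

lemma powr_square: "(z powr e)^2 = z powr (2 * e)" for z e :: real
  by (simp add: power2_eq_square powr_add[symmetric])

lemma abar_integrand_le_moment:
  assumes t: "0 \<le> t" and \<gamma>: "0 \<le> \<gamma>" "\<gamma> \<le> 1" and M: "0 \<le> M" "moment t (f t) x \<le> ennreal M"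
  shows "ennreal \<bar>(1 + t)^2 * japan v powr (2 * \<nu>) * japan (x - (t + 1) *\<^sub>R v) powr (2 * \<omega> - 2)
        * abar \<gamma> f i j t x v * D^2\<bar>
     \<le> ennreal (8 * M) * ennreal ((japan v powr (1/2) * (japan v powr \<nu> * japan (x - (t + 1) *\<^sub>R v) powr \<omega>) * D)^2)"
proof -
  define a b c where "a = japan v" and "b = japan (x - (t + 1) *\<^sub>R v)" and "c = (1 + t)^2"
  have pos: "0 < a" "0 < b" "0 < c" unfolding a_def b_def c_def using t japan_pos by auto
  define P where "P = c * a powr (2 * \<nu>) * b powr (2 * \<omega> - 2) * D^2"
  define K where "K = 8 / c * a * b^2"
  have "0 \<le> P" "0 \<le> K" unfolding P_def K_def using pos by simp_all
  have "\<bar>c * a powr (2 * \<nu>) * b powr (2 * \<omega> - 2) * abar \<gamma> f i j t x v * D^2\<bar>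
      = P * \<bar>abar \<gamma> f i j t x v\<bar>"
    unfolding P_def using pos by (simp add: abs_mult mult_ac)
  then have "ennreal \<bar>c * a powr (2 * \<nu>) * b powr (2 * \<omega> - 2) * abar \<gamma> f i j t x v * D^2\<bar>
      = ennreal P * ennreal \<bar>abar \<gamma> f i j t x v\<bar>"
    using \<open>0 \<le> P\<close> by (simp add: ennreal_mult')
  also have "\<dots> \<le> ennreal P * (ennreal K * ennreal M)"
    using order_trans[OF abs_abar_le_moment[OF t \<gamma>, of f i j x v] mult_left_mono[OF M(2)]]
    by (intro mult_left_mono) (simp_all add: K_def a_def b_def c_def)
  also have "\<dots> = ennreal (P * K * M)"
    using \<open>0 \<le> P\<close> \<open>0 \<le> K\<close> M(1) by (simp add: ennreal_mult mult.assoc)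
  also have "P * K = 8 * (a powr (1/2) * (a powr \<nu> * b powr \<omega>) * D)^2"
  proof -
    have "b powr (2 * \<omega> - 2) * b^2 = b powr (2 * \<omega>)" using pos by (simp add: powr_diff)
    moreover have "(a powr (1/2))^2 = a" using pos by (simp add: powr_square)
    ultimately show ?thesis using pos unfolding P_def K_def
      by (simp add: power_mult_distrib powr_square)
  qed
  also have "ennreal (8 * (a powr (1/2) * (a powr \<nu> * b powr \<omega>) * D)^2 * M)
      = ennreal (8 * M) * ennreal ((a powr (1/2) * (a powr \<nu> * b powr \<omega>) * D)^2)"
    using M(1) by (simp add: ennreal_mult' mult_ac)
  finally show ?thesis unfolding a_def b_def c_def .
qed

lemma nn_integral_abar_integrand_le:
  assumes t: "0 \<le> t" and \<gamma>: "0 \<le> \<gamma>" "\<gamma> \<le> 1" and M: "0 \<le> M" "\<And>x. moment t (f t) x \<le> ennreal M"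
  shows "(\<integral>\<^sup>+x. \<integral>\<^sup>+v. ennreal \<bar>(1 + t)^2 * japan v powr (2 * \<nu>) * japan (x - (t + 1) *\<^sub>R v) powr (2 * \<omega> - 2)
        * abar \<gamma> f i j t x v * (D x v)^2\<bar> \<partial>lborel \<partial>lborel)
     \<le> ennreal (8 * M) * L2sq (\<lambda>x v. japan v powr (1/2) * (japan v powr \<nu> * japan (x - (t + 1) *\<^sub>R v) powr \<omega>) * D x v)"
proof -
  have "(\<integral>\<^sup>+x. \<integral>\<^sup>+v. ennreal \<bar>(1 + t)^2 * japan v powr (2 * \<nu>) * japan (x - (t + 1) *\<^sub>R v) powr (2 * \<omega> - 2)
        * abar \<gamma> f i j t x v * (D x v)^2\<bar> \<partial>lborel \<partial>lborel)
     \<le> (\<integral>\<^sup>+x. ennreal (8 * M) * (\<integral>\<^sup>+v. ennreal ((japan v powr (1/2) * (japan v powr \<nu> * japan (x - (t + 1) *\<^sub>R v) powr \<omega>) * D x v)^2) \<partial>lborel) \<partial>lborel)"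
  proof (intro nn_integral_mono order_trans[OF nn_integral_mono nn_integral_cmult_le])
    fix x v
    show "ennreal \<bar>(1 + t)^2 * japan v powr (2 * \<nu>) * japan (x - (t + 1) *\<^sub>R v) powr (2 * \<omega> - 2)
        * abar \<gamma> f i j t x v * (D x v)^2\<bar>
      \<le> ennreal (8 * M) * ennreal ((japan v powr (1/2) * (japan v powr \<nu> * japan (x - (t + 1) *\<^sub>R v) powr \<omega>) * D x v)^2)"
      by (rule abar_integrand_le_moment[where f = f, OF t \<gamma> M(1) M(2)])
  qed simp
  also have "\<dots> \<le> ennreal (8 * M) * L2sq (\<lambda>x v. japan v powr (1/2) * (japan v powr \<nu> * japan (x - (t + 1) *\<^sub>R v) powr \<omega>) * D x v)"
    unfolding L2sq_def by (rule nn_integral_cmult_le) simp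
  finally show ?thesis .
qed

lemma nn_integral_abar_Dop_sq_slice_le:
  fixes f :: "real \<Rightarrow> phase_fun" and \<epsilon> :: real
  defines "M \<equiv> 512 * (pi^6 + 1) * \<epsilon> powr (3/4)"
  assumes \<gamma>: "0 \<le> \<gamma>" "\<gamma> \<le> 1" and \<epsilon>: "0 < \<epsilon>" and d: "0 \<le> d"
    and reg: "regular_sol Tb f" and t: "t \<in> {0..<Tb}"
    and energy: "\<And>a. mlen a \<le> 3 \<Longrightarrow> L2sq (\<lambda>x v. Wt t a (\<lambda>_. 0) (\<lambda>_. 0) x v
        * Dop t a (\<lambda>_. 0) (\<lambda>_. 0) (\<lambda>x v. exp (d * japan v) * f t x v) x v) \<le> ennreal (\<epsilon> powr (3/2))"
  shows "(\<integral>\<^sup>+x. \<integral>\<^sup>+v. ennreal \<bar>(1 + t)^2 * japan v powr (2 * nu \<alpha> \<beta> \<sigma>)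
        * japan (x - (t + 1) *\<^sub>R v) powr (2 * omega \<alpha> \<beta> \<sigma> - 2) * abar \<gamma> f i j t x v
        * (Dop t \<alpha> \<beta> \<sigma> (\<lambda>x v. exp (d * japan v) * f t x v) x v)^2\<bar> \<partial>lborel \<partial>lborel)
    \<le> ennreal (8 * M) * L2sq (\<lambda>x v. japan v powr (1/2) * Wt t \<alpha> \<beta> \<sigma> x v
        * Dop t \<alpha> \<beta> \<sigma> (\<lambda>x v. exp (d * japan v) * f t x v) x v)"
proof -
  have "512 * (\<epsilon> powr (3/4) * pi^6 + \<epsilon> powr (3/2) / \<epsilon> powr (3/4)) = M"
  proof -
    have "\<epsilon> powr (3/2) = \<epsilon> powr (3/4) * \<epsilon> powr (3/4)" by (simp add: powr_add[symmetric])
    then show ?thesis unfolding M_def using \<epsilon> by (simp add: algebra_simps)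
  qed
  then have "moment t (f t) x \<le> ennreal M" for x
    using moment_le_energy[OF regular_sol_smooth_in_x[OF reg t] d _ _ energy, of "\<epsilon> powr (3/4)"] \<epsilon>
    by simp
  then show ?thesis
    unfolding Wt_def using t \<gamma> \<epsilon>
    by (intro nn_integral_abar_integrand_le) (auto simp: M_def)
qed

lemma bootstrap_constant_le:
  fixes \<epsilon> T k :: real
  assumes \<epsilon>: "0 < \<epsilon>" "\<epsilon> \<le> 1" and "0 \<le> T" "0 \<le> k"
  shows "8 * (512 * (pi^6 + 1) * \<epsilon> powr (3/4)) * ((1 + T) powr k * \<epsilon> powr (3/2))
    \<le> 4096 * (pi^6 + 1) * \<epsilon>^2 * (1 + T) powr (2 * k)"
proof -
  have "\<epsilon> powr (3/4) * \<epsilon> powr (3/2) = \<epsilon> powr (9/4)" by (simp add: powr_add[symmetric])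
  also have "\<dots> \<le> \<epsilon> powr 2" using \<epsilon> by (intro powr_mono') auto
  finally have "\<epsilon> powr (3/4) * \<epsilon> powr (3/2) \<le> \<epsilon>^2" using \<epsilon> by simp
  moreover have "(1 + T) powr k \<le> (1 + T) powr (2 * k)"
    using assms by (intro powr_mono) auto
  ultimately have "(1 + T) powr k * (\<epsilon> powr (3/4) * \<epsilon> powr (3/2)) \<le> (1 + T) powr (2 * k) * \<epsilon>^2"
    by (intro mult_mono) auto
  then have "4096 * (pi^6 + 1) * ((1 + T) powr k * (\<epsilon> powr (3/4) * \<epsilon> powr (3/2)))
      \<le> 4096 * (pi^6 + 1) * ((1 + T) powr (2 * k) * \<epsilon>^2)"
    by (rule mult_left_mono) simp
  then show ?thesis by (simp add: algebra_simps)
qed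

lemma nn_integral_abar_Dop_sq_le:
  fixes f :: "real \<Rightarrow> phase_fun" and d :: "real \<Rightarrow> real"
  defines "g \<equiv> \<lambda>t x v. exp (d t * japan v) * f t x v"
  assumes \<gamma>: "0 \<le> \<gamma>" "\<gamma> \<le> 1" and \<delta>: "0 \<le> \<delta>" and \<epsilon>: "0 < \<epsilon>" "\<epsilon> \<le> 1"
    and d: "\<And>t. 0 \<le> t \<Longrightarrow> 0 \<le> d t" and reg: "regular_sol Tb f" and T: "0 \<le> T" "T < Tb"
    and energy: "ET_sq \<delta> T g \<le> ennreal (\<epsilon> powr (3/2))" and idx: "(\<alpha>, \<beta>, \<sigma>) \<in> MI"
  shows "(\<integral>\<^sup>+t\<in>{0..T}. \<integral>\<^sup>+x. \<integral>\<^sup>+v. ennreal \<bar>(1 + t)^2 * japan v powr (2 * nu \<alpha> \<beta> \<sigma>)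
        * japan (x - (t + 1) *\<^sub>R v) powr (2 * omega \<alpha> \<beta> \<sigma> - 2) * abar \<gamma> f i j t x v
        * (Dop t \<alpha> \<beta> \<sigma> (g t) x v)^2\<bar> \<partial>lborel \<partial>lborel \<partial>lborel)
     \<le> ennreal (4096 * (pi^6 + 1) * \<epsilon>^2 * (1 + T) powr (2 * real (mlen \<beta>) * (1 + \<delta>)))"
proof -
  define M where "M = 512 * (pi^6 + 1) * \<epsilon> powr (3/4)"
  define A where "A t = (\<integral>\<^sup>+x. \<integral>\<^sup>+v. ennreal \<bar>(1 + t)^2 * japan v powr (2 * nu \<alpha> \<beta> \<sigma>)
        * japan (x - (t + 1) *\<^sub>R v) powr (2 * omega \<alpha> \<beta> \<sigma> - 2) * abar \<gamma> f i j t x v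
        * (Dop t \<alpha> \<beta> \<sigma> (g t) x v)^2\<bar> \<partial>lborel \<partial>lborel)" for t
  define L2 where "L2 t = L2sq (\<lambda>x v. japan v powr (1/2) * Wt t \<alpha> \<beta> \<sigma> x v * Dop t \<alpha> \<beta> \<sigma> (g t) x v)" for t
  have "AE t in lborel. t \<in> {0..<T} \<longrightarrow> A t \<le> ennreal (8 * M) * L2 t"
    using ET_sq_ae_spatial_L2sq_le[OF energy T(1)]
    unfolding A_def L2_def M_def g_def
    by (rule eventually_mono) (intro impI nn_integral_abar_Dop_sq_slice_le[OF \<gamma> \<epsilon>(1) d reg]; use T in auto)
  then have "(\<integral>\<^sup>+t\<in>{0..T}. A t \<partial>lborel) \<le> (\<integral>\<^sup>+t. ennreal (8 * M) * (L2 t * indicator {0..<T} t) \<partial>lborel)"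
    using AE_lborel_singleton[of T]
    by (intro nn_integral_mono_AE) (auto elim!: eventually_elim2 split: split_indicator)
  also have "\<dots> \<le> ennreal (8 * M) * (ennreal ((1 + T) powr (real (mlen \<beta>) * (1 + \<delta>))) * ennreal (\<epsilon> powr (3/2)))"
    unfolding L2_def
    by (intro order_trans[OF nn_integral_cmult_le] mult_left_mono ET_sq_time_integral_le[OF energy idx T(1)]) simp_all
  also have "\<dots> \<le> ennreal (4096 * (pi^6 + 1) * \<epsilon>^2 * (1 + T) powr (2 * real (mlen \<beta>) * (1 + \<delta>)))"
    using bootstrap_constant_le[OF \<epsilon> T(1), of "real (mlen \<beta>) * (1 + \<delta>)"] \<delta>
    by (simp add: M_def ennreal_mult'[symmetric] mult.assoc ennreal_leI)
  finally show ?thesis unfolding A_def .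
qed

theorem proposition7p16:
  fixes \<gamma> d0 :: real
  assumes "0 \<le> \<gamma>" "\<gamma> < 1" "0 < d0"
  shows "\<exists>\<epsilon>0 > 0. \<exists>C. \<forall>\<delta> \<epsilon> f_ini Tb (f :: real \<Rightarrow> real^3 \<Rightarrow> real^3 \<Rightarrow> real) \<alpha> \<beta> \<sigma> i j T.
    0 < \<delta> \<longrightarrow> \<delta> < 1/8 \<longrightarrow> 0 \<le> \<epsilon> \<longrightarrow> \<epsilon> \<le> \<epsilon>0 \<longrightarrow>
    (\<Sum>(\<alpha>', \<beta>', \<sigma>')\<in>MI.
        L2sq (\<lambda>x v. Wt 0 \<alpha>' \<beta>' \<sigma>' x v *
           Dop 0 \<alpha>' \<beta>' \<sigma>' (\<lambda>x' v'. exp (2 * d0 * japan v') * f_ini x' v') x v)) < ennreal \<epsilon> \<longrightarrow>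
    0 < Tb \<longrightarrow>
    regular_sol Tb f \<longrightarrow> landau_sol \<gamma> Tb f \<longrightarrow>
    (\<forall>t\<in>{0..<Tb}. \<forall>x v. 0 \<le> f t x v) \<longrightarrow> f 0 = f_ini \<longrightarrow>
    (\<forall>T'\<in>{0..<Tb}. ET_sq \<delta> T' (\<lambda>t x v. exp (dfun d0 \<delta> t * japan v) * f t x v) \<le> ennreal (\<epsilon> powr (3/2))) \<longrightarrow>
    mlen \<alpha> + mlen \<beta> + mlen \<sigma> \<le> 10 \<longrightarrow>
    T \<in> {0..<Tb} \<longrightarrow>
    (\<integral>\<^sup>+ t\<in>{0..T}. (\<integral>\<^sup>+ x. (\<integral>\<^sup>+ v. ennreal \<bar>(1 + t)^2 * japan v powr (2 * nu \<alpha> \<beta> \<sigma>)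
         * japan (x - (t + 1) *\<^sub>R v) powr (2 * omega \<alpha> \<beta> \<sigma> - 2) * abar \<gamma> f i j t x v
         * (Dop t \<alpha> \<beta> \<sigma> (\<lambda>x' v'. exp (dfun d0 \<delta> t * japan v') * f t x' v') x v)^2\<bar> \<partial>lborel) \<partial>lborel) \<partial>lborel)
    \<le> ennreal (C * \<epsilon>^2 * (1 + T) powr (2 * real (mlen \<beta>) * (1 + \<delta>)))"
proof (rule exI[of _ 1], intro conjI exI[of _ "4096 * (pi^6 + 1)"] allI impI)
  fix \<delta> \<epsilon> f_ini Tb and f :: "real \<Rightarrow> real^3 \<Rightarrow> real^3 \<Rightarrow> real" and \<alpha> \<beta> \<sigma> i j T
  assume \<delta>: "0 < \<delta>" and \<epsilon>: "0 \<le> \<epsilon>" "\<epsilon> \<le> 1"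
    and initial: "(\<Sum>(\<alpha>', \<beta>', \<sigma>')\<in>MI. L2sq (\<lambda>x v. Wt 0 \<alpha>' \<beta>' \<sigma>' x v *
           Dop 0 \<alpha>' \<beta>' \<sigma>' (\<lambda>x' v'. exp (2 * d0 * japan v') * f_ini x' v') x v)) < ennreal \<epsilon>"
    and reg: "regular_sol Tb f"
    and energy: "\<forall>T'\<in>{0..<Tb}. ET_sq \<delta> T' (\<lambda>t x v. exp (dfun d0 \<delta> t * japan v) * f t x v) \<le> ennreal (\<epsilon> powr (3/2))"
    and idx: "mlen \<alpha> + mlen \<beta> + mlen \<sigma> \<le> 10" and T: "T \<in> {0..<Tb}"
  (* The initial data enter only through 0 < eps. *)
  have "0 < \<epsilon>"
    using initial \<epsilon>(1) by (cases "\<epsilon> = 0") auto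
  moreover have "0 \<le> dfun d0 \<delta> t" for t
    using assms(3) by (simp add: dfun_def add_nonneg_nonneg)
  ultimately show "(\<integral>\<^sup>+ t\<in>{0..T}. (\<integral>\<^sup>+ x. (\<integral>\<^sup>+ v. ennreal \<bar>(1 + t)^2 * japan v powr (2 * nu \<alpha> \<beta> \<sigma>)
         * japan (x - (t + 1) *\<^sub>R v) powr (2 * omega \<alpha> \<beta> \<sigma> - 2) * abar \<gamma> f i j t x v
         * (Dop t \<alpha> \<beta> \<sigma> (\<lambda>x' v'. exp (dfun d0 \<delta> t * japan v') * f t x' v') x v)^2\<bar> \<partial>lborel) \<partial>lborel) \<partial>lborel)
    \<le> ennreal (4096 * (pi^6 + 1) * \<epsilon>^2 * (1 + T) powr (2 * real (mlen \<beta>) * (1 + \<delta>)))"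
    using assms(1,2) \<delta> \<epsilon>(2) T energy idx
    by (intro nn_integral_abar_Dop_sq_le[OF _ _ _ _ _ _ reg]) (auto simp: MI_def)
qed simp

end
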